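(* In the setting described in the context (in particular under assumptions (A1)–(A4) and $2<\phi_N<\phi_D$), with all quantities other than $N$ held fixed, as $N\to\infty$, \[\sqrt N\,(S-\mu(f))\Rightarrow\mathcal N(0,\sigma_S^2)\quad\text{and}\quad \sqrt N\,(S(c_R)-\mu(f))\Rightarrow\mathcal N(0,\sigma_S^2)\] for any $0\le c_R<\phi_N^{-1/2}$, where $\sigma_S^2:=\mathrm{Var}(D_0)+\sum_{l=0}^\infty\frac{\mathrm{Var}(D_{l,l+1})}{c_{l,l+1}}$ and $\Rightarrow$ denotes convergence in distribution.
   Context: Let $f$ be a real-valued measurable function, $\mu(f)\in\mathbb R$, and $(\tilde\mu_{h_l}(f))_{l\ge0}$ real numbers converging to $\mu(f)$. $D_0$, $D_{l,l+1}$ ($l\ge0$) are real random variables. Given positive constants $c_{0,1}\ge c_{1,2}\ge\cdots$ with $c_{l,l+1}\to0$ and $N\ge1$: $L(N)=\min\{l\in\mathbb N:c_{l,l+1}N\le1\}$; $N_{l,l+1}=\lceil c_{l,l+1}N\rceil$ for $l\le L(N)$, and $N_{l,l+1}\sim\mathrm{Bernoulli}(c_{l,l+1}N)$ for $l>L(N)$, independent of everything else. $D_0^{(1)},\dots,D_0^{(N)}$ are i.i.d. copies of $D_0$ independent of everything else, $S_0=\frac1N\sum_rD_0^{(r)}$; $D^{(r)}_{l,l+1}$ ($1\le r\le N_{l,l+1}$) have the law of $D_{l,l+1}$ and $S_{l,l+1}=\frac{1}{\mathbb E(N_{l,l+1})}\sum_{r=1}^{N_{l,l+1}}D^{(r)}_{l,l+1}$.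 $S=S_0+\sum_{l\ge0}S_{l,l+1}$ with $S_0,S_{0,1},S_{1,2},\dots$ independent, and $S(c_R)=S_0+\sum_{l=0}^{L(N)-1}S_{l,l+1}+\frac{D^{(1)}_{L(N),L(N)+1}}{1-c_R}+\sum_{l>L(N)}\frac{\mathbb 1[N_{l,l+1}=1]}{\mathbb E(N_{l,l+1})}[D^{(1)}_{l,l+1}-D^{(1)}_{L(N),L(N)+1}c_R^{l-L(N)}]$, where $\{D^{(1)}_{l,l+1}\}_{l\ge L(N)}$ may be dependent among themselves. Assumptions: (A1) $\mathbb E(D_0)=\tilde\mu_{h_0}(f)$, $\mathrm{Var}(D_0)<\infty$, $\mathbb E(D_{l,l+1})=\tilde\mu_{h_{l+1}}(f)-\tilde\mu_{h_l}(f)$, $\mathbb E(D_{l,l+1}^2)\le V_D\phi_D^{-l}$ with $V_D>0,\phi_D>2$; (A2) $\underline c_N\phi_N^{-l}\le c_{l,l+1}\le\overline c_N\phi_N^{-l}$ with $0<\underline c_N\le\overline c_N$, $\phi_N>2$; (A3) generating a sample of $D_{l,l+1}$ costs at most $C'2^l(K+lB+B_0)$ for finite constants, and a sample of $D_0$ has finite cost; (A4) for $1\le l\le L(N)-1$, $1\le r\le N_{l,l+1}$, the $D^{(r)}_{l,l+1}$ are mutually independent and independent of $\{D^{(1)}_{l,l+1}\}_{l\ge L(N)}$. *)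

theory Defs
  imports "HOL-Probability.Probability"
begin

definition Lvl :: "(nat \<Rightarrow> real) \<Rightarrow> nat \<Rightarrow> nat" where
  "Lvl c N = (LEAST l. c l * real N \<le> 1)"

text \<open>ceiling(c_(l,l+1) N) as a natural number: the (maximal) number of samples on level l.\<close>
definition nsamp :: "(nat \<Rightarrow> real) \<Rightarrow> nat \<Rightarrow> nat \<Rightarrow> nat" where
  "nsamp c N l = nat \<lceil>c l * real N\<rceil>"

definition Var_of :: "'a measure \<Rightarrow> ('a \<Rightarrow> real) \<Rightarrow> real" where
  "Var_of M X = (\<integral>x. (X x - (\<integral>y. X y \<partial>M))\<^sup>2 \<partial>M)"

definition S0_est :: "nat \<Rightarrow> (nat \<Rightarrow> 'a \<Rightarrow> real) \<Rightarrow> 'a \<Rightarrow> real" where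
  "S0_est N X0 \<omega> = (\<Sum>r=1..N. X0 r \<omega>) / real N"

definition Slev :: "'a measure \<Rightarrow> (nat \<Rightarrow> 'a \<Rightarrow> nat) \<Rightarrow> (nat \<Rightarrow> nat \<Rightarrow> 'a \<Rightarrow> real)
    \<Rightarrow> nat \<Rightarrow> 'a \<Rightarrow> real" where
  "Slev M Nr Y l \<omega> = (\<Sum>r=1..Nr l \<omega>. Y l r \<omega>) / (\<integral>x. real (Nr l x) \<partial>M)"

definition S_est :: "'a measure \<Rightarrow> nat \<Rightarrow> (nat \<Rightarrow> 'a \<Rightarrow> real) \<Rightarrow> (nat \<Rightarrow> 'a \<Rightarrow> nat)
    \<Rightarrow> (nat \<Rightarrow> nat \<Rightarrow> 'a \<Rightarrow> real) \<Rightarrow> 'a \<Rightarrow> real" where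
  "S_est M N X0 Nr Y \<omega> = S0_est N X0 \<omega> + (\<Sum>l. Slev M Nr Y l \<omega>)"

definition SR_est :: "'a measure \<Rightarrow> (nat \<Rightarrow> real) \<Rightarrow> nat \<Rightarrow> real \<Rightarrow> (nat \<Rightarrow> 'a \<Rightarrow> real)
    \<Rightarrow> (nat \<Rightarrow> 'a \<Rightarrow> nat) \<Rightarrow> (nat \<Rightarrow> nat \<Rightarrow> 'a \<Rightarrow> real) \<Rightarrow> 'a \<Rightarrow> real" where
  "SR_est M c N cR X0 Nr Y \<omega> =
     (let L = Lvl c N in
       S0_est N X0 \<omega> + (\<Sum>l<L. Slev M Nr Y l \<omega>) + Y L 1 \<omega> / (1 - cR)
       + (\<Sum>l. if L < l then
                 (if Nr l \<omega> = 1 then 1 else 0) / (\<integral>x. real (Nr l x) \<partial>M)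
                   * (Y l 1 \<omega> - Y L 1 \<omega> * cR ^ (l - L))
               else 0))"

definition normal_law :: "real \<Rightarrow> real \<Rightarrow> real measure" where
  "normal_law m v = (if v = 0 then return borel m else density lborel (normal_density m (sqrt v)))"

definition gen :: "'a measure \<Rightarrow> ('a \<Rightarrow> real) \<Rightarrow> 'a set set" where
  "gen M X = {X -` A \<inter> space M | A. A \<in> sets borel}"

text \<open>Independence blocks for S(c_R): each D_0^(r); each N_(l,l+1), l > L(N);
  each D_(l,l+1)^(r), l < L(N); and the whole family {D_(l,l+1)^(1)}_(l \<ge> L(N)).\<close>
datatype blk = B0 nat | BN nat | BY nat nat | BTail

definition blk_index :: "(nat \<Rightarrow> real) \<Rightarrow> nat \<Rightarrow> blk set" where
  "blk_index c N = B0 ` {1..N} \<union> BN ` {l. Lvl c N < l}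
     \<union> {BY l r | l r. l < Lvl c N \<and> r \<in> {1..nsamp c N l}} \<union> {BTail}"

definition blk_sets :: "'a measure \<Rightarrow> (nat \<Rightarrow> real) \<Rightarrow> nat \<Rightarrow> (nat \<Rightarrow> 'a \<Rightarrow> real)
    \<Rightarrow> (nat \<Rightarrow> 'a \<Rightarrow> nat) \<Rightarrow> (nat \<Rightarrow> nat \<Rightarrow> 'a \<Rightarrow> real) \<Rightarrow> blk \<Rightarrow> 'a set set" where
  "blk_sets M c N X0 Nr Y b = (case b of
      B0 r \<Rightarrow> gen M (X0 r)
    | BN l \<Rightarrow> gen M (\<lambda>\<omega>. real (Nr l \<omega>))
    | BY l r \<Rightarrow> gen M (Y l r)
    | BTail \<Rightarrow> sigma_sets (space M) (\<Union>l\<in>{Lvl c N..}. gen M (Y l 1)))"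

end

(*
  Split sqrt N (S - mu) into a main part and a remainder.  The main part
  sqrt N (S_0 - E D_0) + sum_(l < L(N)) sqrt N (S_(l,l+1) - E D_(l,l+1)) is a sum of independent
  centred samples: N copies of D_0 scaled by 1 / sqrt N and, on each level, n = ceil(c_(l,l+1) N)
  copies of D_(l,l+1) scaled by sqrt N / n.  A second-order expansion of the characteristic
  functions, with Tannery's theorem for the sum over the growing number of levels, shows that its
  characteristic function tends to that of N(0, sigma_S^2).
  From level L(N) on every level uses at most one sample, so by (A1) the remainder, bias
  mu - E S included, has L^1 norm O(sqrt N phiD^(-L(N)/2)); as c_(L(N),L(N)+1) N <= 1, (A2) gives
  N <= phiN^L(N) / cl, and the bound is O((phiN / phiD)^(L(N)/2)) -> 0.  The extra terms of S(c_R)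
  are geometric in c_R, so the same holds whenever c_R < 1.  Since characteristic functions are
  1-Lipschitz in L^1, Levy's continuity theorem concludes.
*)
theory Submission
  imports Defs
begin

lemma abs_exp_neg_sub_linear_le:
  fixes y :: real assumes "0 \<le> y"
  shows "\<bar>exp (- y) - (1 - y)\<bar> \<le> y\<^sup>2"
proof -
  have lower: "1 - y \<le> exp (- y)" by (rule exp_minus_ge)
  have "1 + y \<le> exp y" by (rule exp_ge_add_one_self)
  then have "exp (- y) \<le> 1 / (1 + y)" using assms
    by (simp add: exp_minus field_simps)
  also have "1 / (1 + y) = (1 - y) + y\<^sup>2 / (1 + y)" using assms
    by (simp add: field_simps power2_eq_square)
  also have "y\<^sup>2 / (1 + y) \<le> y\<^sup>2" using assms
    by (simp add: divide_le_eq mult_le_cancel_left1)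
  finally show ?thesis using lower by simp
qed

text \<open>The remainder term of the second-order expansion \<open>char_approx3\<close> of a characteristic function.\<close>
definition trunc_cubic_moment :: "real measure \<Rightarrow> real \<Rightarrow> real" where
  "trunc_cubic_moment \<mu> e = (\<integral>x. min (6 * x\<^sup>2) (e * \<bar>x\<bar> ^ 3) \<partial>\<mu>)"

lemma
  fixes \<mu> :: "real measure"
  assumes sb: "sets \<mu> = sets borel" and i2: "integrable \<mu> (\<lambda>x. x\<^sup>2)" and e: "0 \<le> e"
  shows trunc_cubic_moment_nonneg: "0 \<le> trunc_cubic_moment \<mu> e"
    and trunc_cubic_moment_le: "trunc_cubic_moment \<mu> e \<le> 6 * (\<integral>x. x\<^sup>2 \<partial>\<mu>)"
    and trunc_cubic_moment_mono: "e \<le> e' \<Longrightarrow> trunc_cubic_moment \<mu> e \<le> trunc_cubic_moment \<mu> e'"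
proof -
  have integrable: "integrable \<mu> (\<lambda>x. min (6 * x\<^sup>2) (\<epsilon> * \<bar>x\<bar> ^ 3))" if "0 \<le> \<epsilon>" for \<epsilon>
  proof (rule Bochner_Integration.integrable_bound[where f="\<lambda>x. 6 * x\<^sup>2"])
    show "(\<lambda>x. min (6 * x\<^sup>2) (\<epsilon> * \<bar>x\<bar> ^ 3)) \<in> borel_measurable \<mu>"
      unfolding measurable_cong_sets[OF sb refl] by measurable
  qed (use i2 that in auto)
  show "0 \<le> trunc_cubic_moment \<mu> e"
    unfolding trunc_cubic_moment_def using e by (intro integral_nonneg_AE AE_I2) auto
  have "trunc_cubic_moment \<mu> e \<le> (\<integral>x. 6 * x\<^sup>2 \<partial>\<mu>)"
    unfolding trunc_cubic_moment_def by (rule integral_mono[OF integrable[OF e]]) (use i2 in auto)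
  then show "trunc_cubic_moment \<mu> e \<le> 6 * (\<integral>x. x\<^sup>2 \<partial>\<mu>)" by simp
  assume "e \<le> e'"
  then show "trunc_cubic_moment \<mu> e \<le> trunc_cubic_moment \<mu> e'"
    unfolding trunc_cubic_moment_def using e
    by (intro integral_mono integrable min.mono order_refl mult_right_mono) auto
qed

lemma trunc_cubic_moment_tendsto_0:
  fixes \<mu> :: "real measure" and \<epsilon> :: "nat \<Rightarrow> real"
  assumes sb: "sets \<mu> = sets borel" and i2: "integrable \<mu> (\<lambda>x. x\<^sup>2)" and e: "\<epsilon> \<longlonglongrightarrow> 0"
  shows "(\<lambda>n. trunc_cubic_moment \<mu> \<bar>\<epsilon> n\<bar>) \<longlonglongrightarrow> 0"
proof -
  have "(\<lambda>n. \<integral>x. min (6 * x\<^sup>2) (\<bar>\<epsilon> n\<bar> * \<bar>x\<bar> ^ 3) \<partial>\<mu>) \<longlonglongrightarrow> (\<integral>x. 0 \<partial>\<mu>)"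
  proof (rule integral_dominated_convergence[where w = "\<lambda>x. 6 * x\<^sup>2"])
    show "AE x in \<mu>. (\<lambda>n. min (6 * x\<^sup>2) (\<bar>\<epsilon> n\<bar> * \<bar>x\<bar> ^ 3)) \<longlonglongrightarrow> 0"
    proof (rule AE_I2)
      fix x :: real
      have "(\<lambda>n. \<bar>\<epsilon> n\<bar> * \<bar>x\<bar> ^ 3) \<longlonglongrightarrow> 0 * \<bar>x\<bar> ^ 3"
        by (intro tendsto_intros tendsto_rabs_zero e)
      then have "(\<lambda>n. min (6 * x\<^sup>2) (\<bar>\<epsilon> n\<bar> * \<bar>x\<bar> ^ 3)) \<longlonglongrightarrow> min (6 * x\<^sup>2) 0"
        by (intro tendsto_min tendsto_const) simp
      then show "(\<lambda>n. min (6 * x\<^sup>2) (\<bar>\<epsilon> n\<bar> * \<bar>x\<bar> ^ 3)) \<longlonglongrightarrow> 0"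
        by simp
    qed
    show "\<And>n. (\<lambda>x. min (6 * x\<^sup>2) (\<bar>\<epsilon> n\<bar> * \<bar>x\<bar> ^ 3)) \<in> borel_measurable \<mu>"
      unfolding measurable_cong_sets[OF sb refl] by measurable
  qed (use i2 in auto)
  then show ?thesis by (simp add: trunc_cubic_moment_def)
qed

lemma char_sub_gaussian_le:
  assumes rd: "real_distribution \<mu>" and i1: "integrable \<mu> (\<lambda>x. x)" and i2: "integrable \<mu> (\<lambda>x. x\<^sup>2)"
    and m0: "(\<integral>x. x \<partial>\<mu>) = 0" and v: "(\<integral>x. x\<^sup>2 \<partial>\<mu>) = v"
  shows "cmod (char \<mu> s - complex_of_real (exp (- (s\<^sup>2 * v / 2))))
     \<le> s\<^sup>2 / 6 * trunc_cubic_moment \<mu> \<bar>s\<bar> + (s\<^sup>2 * v / 2)\<^sup>2"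
proof -
  interpret real_distribution \<mu> by fact
  have v0: "0 \<le> v" using v by (metis integral_nonneg_AE AE_I2 zero_le_power2)
  let ?a = "complex_of_real (1 - s\<^sup>2 * v / 2)"
  have taylor: "cmod (char \<mu> s - ?a) \<le> s\<^sup>2 / 6 * trunc_cubic_moment \<mu> \<bar>s\<bar>"
    unfolding trunc_cubic_moment_def using m0 v by (intro char_approx3[OF i1 m0 i2]) simp
  have "\<bar>exp (- (s\<^sup>2 * v / 2)) - (1 - s\<^sup>2 * v / 2)\<bar> \<le> (s\<^sup>2 * v / 2)\<^sup>2"
    by (rule abs_exp_neg_sub_linear_le) (use v0 in simp)
  then have gauss: "cmod (?a - complex_of_real (exp (- (s\<^sup>2 * v / 2)))) \<le> (s\<^sup>2 * v / 2)\<^sup>2"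
    by (simp only: norm_of_real of_real_diff[symmetric] abs_minus_commute)
  show ?thesis
    using norm_triangle_ineq[of "char \<mu> s - ?a" "?a - complex_of_real (exp (- (s\<^sup>2 * v / 2)))"] taylor gauss
    by simp
qed

lemma char_power_sub_gaussian_le:
  assumes rd: "real_distribution \<mu>" and i1: "integrable \<mu> (\<lambda>x. x)" and i2: "integrable \<mu> (\<lambda>x. x\<^sup>2)"
    and m0: "(\<integral>x. x \<partial>\<mu>) = 0" and v: "(\<integral>x. x\<^sup>2 \<partial>\<mu>) = v"
  shows "cmod (char \<mu> s ^ n - complex_of_real (exp (- (s\<^sup>2 * v / 2))) ^ n)
     \<le> real n * (s\<^sup>2 / 6 * trunc_cubic_moment \<mu> \<bar>s\<bar> + (s\<^sup>2 * v / 2)\<^sup>2)"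
proof -
  interpret real_distribution \<mu> by fact
  have "0 \<le> v" using v by (metis integral_nonneg_AE AE_I2 zero_le_power2)
  then have "cmod (char \<mu> s ^ n - complex_of_real (exp (- (s\<^sup>2 * v / 2))) ^ n)
      \<le> real n * cmod (char \<mu> s - complex_of_real (exp (- (s\<^sup>2 * v / 2))))"
    by (intro norm_power_diff cmod_char_le_1) simp
  also have "\<dots> \<le> real n * (s\<^sup>2 / 6 * trunc_cubic_moment \<mu> \<bar>s\<bar> + (s\<^sup>2 * v / 2)\<^sup>2)"
    by (intro mult_left_mono char_sub_gaussian_le[OF assms]) simp
  finally show ?thesis .
qed

lemma char_normal_law:
  assumes "0 \<le> v"
  shows "char (normal_law 0 v) t = complex_of_real (exp (- (v * t\<^sup>2 / 2)))"
proof (cases "v = 0")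
  case True
  then show ?thesis by (simp add: normal_law_def char_def integral_return)
next
  case False
  define \<sigma> where "\<sigma> = sqrt v"
  have s: "0 < \<sigma>" using assms False by (simp add: \<sigma>_def)
  have "char (normal_law 0 v) t = char (density lborel (normal_density 0 \<sigma>)) t"
    using False by (simp add: normal_law_def \<sigma>_def)
  also have "\<dots> = (\<integral>x. normal_density 0 \<sigma> x *\<^sub>R iexp (t * x) \<partial>lborel)"
    unfolding char_def
    by (subst integral_density) (auto simp: normal_density_nonneg)
  also have "\<dots> = \<bar>\<sigma>\<bar> *\<^sub>R (\<integral>y. normal_density 0 \<sigma> (0 + \<sigma> * y) *\<^sub>R iexp (t * (0 + \<sigma> * y)) \<partial>lborel)"
    using s by (intro lborel_integral_real_affine) simp
  also have "\<dots> = (\<integral>y. std_normal_density y *\<^sub>R iexp ((t * \<sigma>) * y) \<partial>lborel)"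
  proof -
    have "\<And>y. \<sigma> * normal_density 0 \<sigma> (\<sigma> * y) = std_normal_density y"
      using s by (simp add: normal_density_def real_sqrt_mult field_simps power2_eq_square)
    then show ?thesis using s
      by (simp add: scaleR_scaleR mult.assoc mult.left_commute[of t] flip: integral_scaleR_right)
  qed
  also have "\<dots> = char std_normal_distribution (t * \<sigma>)"
    unfolding char_def
    by (subst integral_density) (auto simp: normal_density_nonneg)
  also have "\<dots> = complex_of_real (exp (- (v * t\<^sup>2 / 2)))"
    using s assms by (simp add: char_std_normal_distribution \<sigma>_def power_mult_distrib mult.commute)
  finally show ?thesis .
qed

lemma real_distribution_normal_law:
  assumes "0 \<le> v" shows "real_distribution (normal_law 0 v)"
proof (cases "v = 0")
  case True
  then show ?thesis
    by (simp add: normal_law_def real_distribution_def real_distribution_axioms_def prob_space_return)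
next
  case False
  then have "0 < sqrt v" using assms by simp
  then show ?thesis using False
    by (simp add: normal_law_def real_distribution_def real_distribution_axioms_def prob_space_normal_density)
qed

lemma norm_iexp_diff_le: "cmod (iexp a - iexp b) \<le> \<bar>a - b\<bar>"
proof -
  have "iexp a - iexp b = iexp b * (iexp (a - b) - 1)"
    by (simp add: algebra_simps flip: exp_add)
  then have "cmod (iexp a - iexp b) = cmod (iexp (a - b) - 1)"
    by (simp add: norm_mult)
  also have "\<dots> \<le> \<bar>a - b\<bar>"
    using iexp_approx1[of "a - b" 0] by simp
  finally show ?thesis .
qed

lemma (in prob_space) norm_char_distr_diff_le:
  assumes X[measurable]: "X \<in> borel_measurable M" and A[measurable]: "A \<in> borel_measurable M"
    and i: "integrable M (\<lambda>\<omega>. X \<omega> - A \<omega>)"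
  shows "cmod (char (distr M borel X) t - char (distr M borel A) t) \<le> \<bar>t\<bar> * (\<integral>\<omega>. \<bar>X \<omega> - A \<omega>\<bar> \<partial>M)"
proof -
  have "char (distr M borel X) t - char (distr M borel A) t = (CLINT \<omega>|M. iexp (t * X \<omega>) - iexp (t * A \<omega>))"
    unfolding char_def by (simp add: integral_distr integrable_iexp)
  also have "cmod \<dots> \<le> (\<integral>\<omega>. cmod (iexp (t * X \<omega>) - iexp (t * A \<omega>)) \<partial>M)"
    by (rule integral_norm_bound)
  also have "\<dots> \<le> (\<integral>\<omega>. \<bar>t\<bar> * \<bar>X \<omega> - A \<omega>\<bar> \<partial>M)"
  proof (rule integral_mono)
    show "integrable M (\<lambda>\<omega>. cmod (iexp (t * X \<omega>) - iexp (t * A \<omega>)))"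
      by (intro integrable_norm Bochner_Integration.integrable_diff integrable_iexp) auto
    show "integrable M (\<lambda>\<omega>. \<bar>t\<bar> * \<bar>X \<omega> - A \<omega>\<bar>)"
      using i by (intro integrable_mult_right integrable_abs)
    fix \<omega> show "cmod (iexp (t * X \<omega>) - iexp (t * A \<omega>)) \<le> \<bar>t\<bar> * \<bar>X \<omega> - A \<omega>\<bar>"
      using norm_iexp_diff_le[of "t * X \<omega>" "t * A \<omega>"] by (simp add: right_diff_distrib[symmetric] abs_mult)
  qed
  also have "\<dots> = \<bar>t\<bar> * (\<integral>\<omega>. \<bar>X \<omega> - A \<omega>\<bar> \<partial>M)" by simp
  finally show ?thesis .
qed

lemma norm_mult_diff_le:
  fixes a b x y :: "'a::real_normed_algebra"
  assumes "norm x \<le> 1" "norm b \<le> 1"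
  shows "norm (a * x - b * y) \<le> norm (a - b) + norm (x - y)"
proof -
  have "a * x - b * y = (a - b) * x + b * (x - y)"
    by (simp add: algebra_simps)
  then have "norm (a * x - b * y) \<le> norm ((a - b) * x) + norm (b * (x - y))"
    by (simp add: norm_triangle_ineq)
  also have "\<dots> \<le> norm (a - b) * norm x + norm b * norm (x - y)"
    by (intro add_mono norm_mult_ineq)
  also have "\<dots> \<le> norm (a - b) + norm (x - y)"
    using assms by (intro add_mono mult_left_le mult_left_le_one_le) auto
  finally show ?thesis .
qed

lemma tendsto_real_div_affine:
  fixes c :: real assumes "0 < c"
  shows "(\<lambda>N. real N / (c * real N + 1)) \<longlonglongrightarrow> 1 / c"
proof -
  have "(\<lambda>N. 1 / (c + 1 / real N)) \<longlonglongrightarrow> 1 / (c + 0)"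
    by (intro tendsto_intros lim_1_over_n) (use assms in simp)
  moreover have "\<forall>\<^sub>F N in sequentially. 1 / (c + 1 / real N) = real N / (c * real N + 1)"
    using eventually_ge_at_top[of 1] by eventually_elim (use assms in \<open>simp add: field_simps\<close>)
  ultimately show ?thesis by (simp add: tendsto_cong)
qed

lemma tendsto_inverse_sqrt_real: "(\<lambda>N. 1 / sqrt (real N)) \<longlonglongrightarrow> 0"
  by (intro tendsto_divide_0[OF tendsto_const] sqrt_at_top[THEN filterlim_compose]
      filterlim_real_sequentially filterlim_at_top_imp_at_infinity)

lemma summable_power2_nonneg:
  fixes a :: "nat \<Rightarrow> real"
  assumes "summable a" "\<And>l. 0 \<le> a l"
  shows "summable (\<lambda>l. (a l)\<^sup>2)"
proof (rule summable_comparison_test_ev[OF _ assms(1)])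
  have "a \<longlonglongrightarrow> 0" by (rule summable_LIMSEQ_zero[OF assms(1)])
  then have "\<forall>\<^sub>F l in sequentially. dist (a l) 0 < 1" by (rule tendstoD) simp
  then show "\<forall>\<^sub>F l in sequentially. norm ((a l)\<^sup>2) \<le> a l"
  proof eventually_elim
    case (elim l)
    then have "a l \<le> 1" using assms(2)[of l] by simp
    then show ?case using assms(2)[of l] by (simp add: power2_eq_square mult_left_le_one_le)
  qed
qed

lemma sample_size_ratio_bounds:
  fixes x m c :: real
  assumes c: "0 < c" and x: "1 \<le> x" and m: "1 \<le> m" and cm: "c * x \<le> m"
  shows "x / m \<le> 1 / c" and "sqrt x / m \<le> 1 / (c * sqrt x)"
    and "x\<^sup>2 / m ^ 3 \<le> 1 / (c ^ 3 * x)" and "x\<^sup>2 / m ^ 3 \<le> 1 / c\<^sup>2"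
proof -
  have m0: "0 < m" using m by simp
  show "x / m \<le> 1 / c" using c m0 cm by (simp add: field_simps)
  have "sqrt x / m \<le> sqrt x / (c * (sqrt x * sqrt x))"
    using c x cm m0 by (intro divide_left_mono) auto
  also have "\<dots> = 1 / (c * sqrt x)" using x c by (simp add: divide_simps)
  finally show "sqrt x / m \<le> 1 / (c * sqrt x)" .
  have "x\<^sup>2 / m ^ 3 \<le> x\<^sup>2 / (c * x) ^ 3"
    using c x cm m0 by (intro divide_left_mono power_mono) auto
  also have "\<dots> = 1 / (c ^ 3 * x)" using c x by (simp add: field_simps power2_eq_square power3_eq_cube)
  finally show "x\<^sup>2 / m ^ 3 \<le> 1 / (c ^ 3 * x)" .
  have "(c * x)\<^sup>2 \<le> m\<^sup>2" using c x cm by (intro power_mono) auto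
  also have "m\<^sup>2 \<le> m ^ 3" using m by (simp add: power_increasing)
  finally have "x\<^sup>2 / m ^ 3 \<le> x\<^sup>2 / (c * x)\<^sup>2"
    using c x m0 by (intro divide_left_mono) auto
  also have "\<dots> = 1 / c\<^sup>2" using c x by (simp add: field_simps power2_eq_square)
  finally show "x\<^sup>2 / m ^ 3 \<le> 1 / c\<^sup>2" .
qed

text \<open>
  The characteristic function of a mean of \<open>m\<close> i.i.d. centred samples of law \<open>\<mu>\<close>, scaled by
  \<open>sqrt x\<close>, differs from the Gaussian one by at most the following quantity, which is bounded
  uniformly as long as \<open>m \<ge> c x\<close>, and is small for large \<open>x\<close>.
\<close>
lemma sample_mean_error_bounds:
  fixes \<mu> :: "real measure" and t x m c v :: real
  assumes sb: "sets \<mu> = sets borel" and i2: "integrable \<mu> (\<lambda>x. x\<^sup>2)" and v: "(\<integral>x. x\<^sup>2 \<partial>\<mu>) = v"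
    and c: "0 < c" and x: "1 \<le> x" and m: "1 \<le> m" and cm: "c * x \<le> m"
  defines "s \<equiv> t * sqrt x / m"
  shows "0 \<le> m * (s\<^sup>2 / 6 * trunc_cubic_moment \<mu> \<bar>s\<bar> + (s\<^sup>2 * v / 2)\<^sup>2)"
    and "m * (s\<^sup>2 / 6 * trunc_cubic_moment \<mu> \<bar>s\<bar> + (s\<^sup>2 * v / 2)\<^sup>2)
           \<le> t\<^sup>2 * (v / c) + t ^ 4 / 4 * (v / c)\<^sup>2"
    and "m * (s\<^sup>2 / 6 * trunc_cubic_moment \<mu> \<bar>s\<bar> + (s\<^sup>2 * v / 2)\<^sup>2)
           \<le> t\<^sup>2 / 6 * (1 / c) * trunc_cubic_moment \<mu> (\<bar>t\<bar> * (1 / (c * sqrt x)))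
             + t ^ 4 / 4 * v\<^sup>2 * (1 / (c ^ 3 * x))"
proof -
  note ratio = sample_size_ratio_bounds[OF c x m cm]
  have v0: "0 \<le> v" unfolding v[symmetric] by (intro integral_nonneg_AE AE_I2) auto
  have e0: "0 \<le> \<bar>t\<bar> * (sqrt x / m)" using m x by (intro mult_nonneg_nonneg divide_nonneg_nonneg) auto
  have T0: "0 \<le> trunc_cubic_moment \<mu> (\<bar>t\<bar> * (sqrt x / m))"
    by (rule trunc_cubic_moment_nonneg[OF sb i2 e0])
  have "m * (s\<^sup>2 / 6 * trunc_cubic_moment \<mu> \<bar>s\<bar> + (s\<^sup>2 * v / 2)\<^sup>2)
     = t\<^sup>2 / 6 * (x / m) * trunc_cubic_moment \<mu> (\<bar>t\<bar> * (sqrt x / m)) + t ^ 4 / 4 * v\<^sup>2 * (x\<^sup>2 / m ^ 3)"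
    using m x unfolding s_def
    apply (simp add: power_divide power_mult_distrib abs_mult field_simps)
    apply algebra
    done
  note form = this
  show "0 \<le> m * (s\<^sup>2 / 6 * trunc_cubic_moment \<mu> \<bar>s\<bar> + (s\<^sup>2 * v / 2)\<^sup>2)"
    unfolding form using T0 x m by simp
  have "t\<^sup>2 / 6 * (x / m) * trunc_cubic_moment \<mu> (\<bar>t\<bar> * (sqrt x / m)) \<le> t\<^sup>2 / 6 * (1 / c) * (6 * v)"
    using trunc_cubic_moment_le[OF sb i2 e0] T0 c x m ratio(1) v
    by (intro mult_mono mult_nonneg_nonneg) auto
  moreover have "t ^ 4 / 4 * v\<^sup>2 * (x\<^sup>2 / m ^ 3) \<le> t ^ 4 / 4 * v\<^sup>2 * (1 / c\<^sup>2)"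
    by (intro mult_left_mono ratio(4)) auto
  ultimately show "m * (s\<^sup>2 / 6 * trunc_cubic_moment \<mu> \<bar>s\<bar> + (s\<^sup>2 * v / 2)\<^sup>2)
           \<le> t\<^sup>2 * (v / c) + t ^ 4 / 4 * (v / c)\<^sup>2"
    unfolding form by (simp add: power_divide)
  have "trunc_cubic_moment \<mu> (\<bar>t\<bar> * (sqrt x / m)) \<le> trunc_cubic_moment \<mu> (\<bar>t\<bar> * (1 / (c * sqrt x)))"
    by (intro trunc_cubic_moment_mono[OF sb i2 e0] mult_left_mono ratio(2)) simp
  then have "t\<^sup>2 / 6 * (x / m) * trunc_cubic_moment \<mu> (\<bar>t\<bar> * (sqrt x / m))
      \<le> t\<^sup>2 / 6 * (1 / c) * trunc_cubic_moment \<mu> (\<bar>t\<bar> * (1 / (c * sqrt x)))"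
    using T0 c x m ratio(1) by (intro mult_mono mult_nonneg_nonneg) auto
  moreover have "t ^ 4 / 4 * v\<^sup>2 * (x\<^sup>2 / m ^ 3) \<le> t ^ 4 / 4 * v\<^sup>2 * (1 / (c ^ 3 * x))"
    by (intro mult_left_mono ratio(3)) auto
  ultimately show "m * (s\<^sup>2 / 6 * trunc_cubic_moment \<mu> \<bar>s\<bar> + (s\<^sup>2 * v / 2)\<^sup>2)
           \<le> t\<^sup>2 / 6 * (1 / c) * trunc_cubic_moment \<mu> (\<bar>t\<bar> * (1 / (c * sqrt x)))
             + t ^ 4 / 4 * v\<^sup>2 * (1 / (c ^ 3 * x))"
    unfolding form by simp
qed

lemma small_scale_error_tendsto_0:
  fixes \<mu> :: "real measure" and c t v :: real
  assumes sb: "sets \<mu> = sets borel" and i2: "integrable \<mu> (\<lambda>x. x\<^sup>2)" and c: "0 < c"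
  shows "(\<lambda>N. t\<^sup>2 / 6 * (1 / c) * trunc_cubic_moment \<mu> (\<bar>t\<bar> * (1 / (c * sqrt (real N))))
            + t ^ 4 / 4 * v\<^sup>2 * (1 / (c ^ 3 * real N))) \<longlonglongrightarrow> 0"
proof -
  have "(\<lambda>N. \<bar>t\<bar> / c * (1 / sqrt (real N))) \<longlonglongrightarrow> \<bar>t\<bar> / c * 0"
    by (intro tendsto_intros tendsto_inverse_sqrt_real)
  then have "(\<lambda>N. trunc_cubic_moment \<mu> \<bar>\<bar>t\<bar> * (1 / (c * sqrt (real N)))\<bar>) \<longlonglongrightarrow> 0"
    by (intro trunc_cubic_moment_tendsto_0[OF sb i2]) simp
  then have trunc: "(\<lambda>N. trunc_cubic_moment \<mu> (\<bar>t\<bar> * (1 / (c * sqrt (real N))))) \<longlonglongrightarrow> 0"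
    using c by (simp add: abs_mult)
  have "(\<lambda>N. 1 / (c ^ 3 * real N)) \<longlonglongrightarrow> 0"
    using tendsto_mult[OF tendsto_const[of "1 / c ^ 3"] lim_1_over_n] by simp
  then have "(\<lambda>N. t\<^sup>2 / 6 * (1 / c) * trunc_cubic_moment \<mu> (\<bar>t\<bar> * (1 / (c * sqrt (real N))))
            + t ^ 4 / 4 * v\<^sup>2 * (1 / (c ^ 3 * real N))) \<longlonglongrightarrow> t\<^sup>2 / 6 * (1 / c) * 0 + t ^ 4 / 4 * v\<^sup>2 * 0"
    by (intro tendsto_add tendsto_mult tendsto_const trunc)
  then show ?thesis by simp
qed

lemma iid_error_tendsto_0:
  fixes \<mu> :: "real measure"
  assumes sb: "sets \<mu> = sets borel" and i2: "integrable \<mu> (\<lambda>x. x\<^sup>2)" and v: "(\<integral>x. x\<^sup>2 \<partial>\<mu>) = v"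
  shows "(\<lambda>N. real N * ((t / sqrt (real N))\<^sup>2 / 6 * trunc_cubic_moment \<mu> \<bar>t / sqrt (real N)\<bar>
            + ((t / sqrt (real N))\<^sup>2 * v / 2)\<^sup>2)) \<longlonglongrightarrow> 0"
    (is "?E \<longlonglongrightarrow> 0")
proof (rule tendsto_sandwich[OF _ _ tendsto_const small_scale_error_tendsto_0[OF sb i2, of 1]])
  have scale: "t / sqrt (real N) = t * sqrt (real N) / real N" if "1 \<le> N" for N
    using that by (simp add: field_simps real_sqrt_mult[symmetric])
  note bounds = sample_mean_error_bounds[OF sb i2 v, where c = 1 and x = "real N" and m = "real N" and t = t for N]
  show "\<forall>\<^sub>F N in sequentially. 0 \<le> ?E N"
    using eventually_ge_at_top[of 1] by eventually_elim (use bounds(1) scale in auto)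
  show "\<forall>\<^sub>F N in sequentially. ?E N \<le> t\<^sup>2 / 6 * (1 / 1) * trunc_cubic_moment \<mu> (\<bar>t\<bar> * (1 / (1 * sqrt (real N))))
            + t ^ 4 / 4 * v\<^sup>2 * (1 / (1 ^ 3 * real N))"
    using eventually_ge_at_top[of 1] by eventually_elim (use bounds(3) scale in auto)
qed simp

locale level_sample_sizes =
  fixes c :: "nat \<Rightarrow> real" and Lv :: "nat \<Rightarrow> nat" and n :: "nat \<Rightarrow> nat \<Rightarrow> nat"
  assumes c_pos: "\<And>l. 0 < c l"
    and Lv_eventually: "\<And>l. \<forall>\<^sub>F N in sequentially. l < Lv N"
    and n_lower: "\<And>N l. l < Lv N \<Longrightarrow> c l * real N \<le> real (n N l)"
    and n_upper: "\<And>N l. l < Lv N \<Longrightarrow> real (n N l) \<le> c l * real N + 1"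
    and n_pos: "\<And>N l. l < Lv N \<Longrightarrow> 1 \<le> n N l"
begin

lemma scaled_variance_sum_tendsto:
  fixes v :: "nat \<Rightarrow> real"
  assumes v0: "\<And>l. 0 \<le> v l" and summ: "summable (\<lambda>l. v l / c l)"
  shows "(\<lambda>N. \<Sum>l<Lv N. real N * v l / real (n N l)) \<longlonglongrightarrow> (\<Sum>l. v l / c l)"
proof -
  define f where "f l N = (if l < Lv N then v l * (real N / real (n N l)) else 0)" for l N
  have ratio_le: "real N / real (n N l) \<le> 1 / c l" if "l < Lv N" for N l
    using n_lower[OF that] n_pos[OF that] c_pos[of l] by (simp add: field_simps)
  have "(\<lambda>N. \<Sum>l. f l N) \<longlonglongrightarrow> (\<Sum>l. v l / c l)"
  proof (rule tannerys_theorem[THEN conjunct2, THEN conjunct2])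
    show "\<forall>\<^sub>F (l, N) in sequentially \<times>\<^sub>F sequentially. norm (f l N) \<le> v l / c l"
    proof (intro always_eventually allI, clarify)
      fix l N
      have "v l * (real N / real (n N l)) \<le> v l * (1 / c l)" if "l < Lv N"
        using mult_left_mono[OF ratio_le[OF that] v0] .
      then show "norm (f l N) \<le> v l / c l"
        using v0[of l] c_pos[of l] by (auto simp: f_def)
    qed
    fix l
    show "(\<lambda>N. f l N) \<longlonglongrightarrow> v l / c l"
    proof (rule tendsto_sandwich[where f="\<lambda>N. v l * (real N / (c l * real N + 1))" and h="\<lambda>N. v l / c l"])
      show "\<forall>\<^sub>F N in sequentially. v l * (real N / (c l * real N + 1)) \<le> f l N"
        using Lv_eventually[of l]
      proof eventually_elim
        case (elim N)
        have "real N / (c l * real N + 1) \<le> real N / real (n N l)"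
          using n_upper[OF elim] n_pos[OF elim] c_pos[of l] by (intro divide_left_mono) auto
        then have "v l * (real N / (c l * real N + 1)) \<le> v l * (real N / real (n N l))"
          by (rule mult_left_mono[OF _ v0])
        then show ?case using elim by (simp add: f_def)
      qed
      show "\<forall>\<^sub>F N in sequentially. f l N \<le> v l / c l"
        using Lv_eventually[of l] by eventually_elim (use mult_left_mono[OF ratio_le v0] in \<open>simp add: f_def\<close>)
      show "(\<lambda>N. v l * (real N / (c l * real N + 1))) \<longlonglongrightarrow> v l / c l"
        using tendsto_mult[OF tendsto_const[of "v l"] tendsto_real_div_affine[OF c_pos[of l]]] by simp
    qed simp
  qed (simp_all add: summ)
  moreover have "(\<Sum>l<Lv N. real N * v l / real (n N l)) = (\<Sum>l. f l N)" for N
    by (subst suminf_finite[of "{..<Lv N}"]) (auto simp: f_def mult.commute)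
  ultimately show ?thesis by simp
qed

lemma level_error_sum_tendsto_0:
  fixes \<mu> :: "nat \<Rightarrow> real measure" and v :: "nat \<Rightarrow> real" and t :: real
  assumes sb: "\<And>l. sets (\<mu> l) = sets borel" and i2: "\<And>l. integrable (\<mu> l) (\<lambda>x. x\<^sup>2)"
    and v: "\<And>l. (\<integral>x. x\<^sup>2 \<partial>\<mu> l) = v l" and summ: "summable (\<lambda>l. v l / c l)"
  defines "s \<equiv> \<lambda>N l. t * sqrt (real N) / real (n N l)"
  shows "(\<lambda>N. \<Sum>l<Lv N. real (n N l) * ((s N l)\<^sup>2 / 6 * trunc_cubic_moment (\<mu> l) \<bar>s N l\<bar>
             + ((s N l)\<^sup>2 * v l / 2)\<^sup>2)) \<longlonglongrightarrow> 0"
proof -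
  define E where "E l N = real (n N l) * ((s N l)\<^sup>2 / 6 * trunc_cubic_moment (\<mu> l) \<bar>s N l\<bar>
             + ((s N l)\<^sup>2 * v l / 2)\<^sup>2)" for l N
  define f where "f l N = (if l < Lv N then E l N else 0)" for l N
  define Mb where "Mb l = t\<^sup>2 * (v l / c l) + t ^ 4 / 4 * (v l / c l)\<^sup>2" for l
  have v0: "0 \<le> v l" for l unfolding v[symmetric] by (intro integral_nonneg_AE AE_I2) auto
  have bounds: "0 \<le> E l N" "E l N \<le> Mb l"
      "E l N \<le> t\<^sup>2 / 6 * (1 / c l) * trunc_cubic_moment (\<mu> l) (\<bar>t\<bar> * (1 / (c l * sqrt (real N))))
             + t ^ 4 / 4 * (v l)\<^sup>2 * (1 / (c l ^ 3 * real N))"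
    if "l < Lv N" "1 \<le> N" for l N
    using sample_mean_error_bounds[OF sb[of l] i2[of l] v[of l] c_pos[of l], where x = "real N" and m = "real (n N l)" and t = t] n_pos n_lower that
    by (auto simp: E_def Mb_def s_def)
  have "(\<lambda>N. \<Sum>l. f l N) \<longlonglongrightarrow> (\<Sum>l. 0)"
  proof (rule tannerys_theorem[THEN conjunct2, THEN conjunct2])
    have "summable (\<lambda>l. (v l / c l)\<^sup>2)"
      by (rule summable_power2_nonneg[OF summ]) (simp add: v0 c_pos less_imp_le)
    then show "summable Mb" unfolding Mb_def
      by (intro summable_add summable_mult summ)
    show "\<forall>\<^sub>F (l, N) in sequentially \<times>\<^sub>F sequentially. norm (f l N) \<le> Mb l"
    proof (intro always_eventually allI, clarify)
      fix l N
      have "0 \<le> Mb l" using v0[of l] c_pos[of l] by (simp add: Mb_def)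
      moreover have "E l 0 = 0" by (simp add: E_def s_def)
      ultimately show "norm (f l N) \<le> Mb l"
        using bounds(1,2)[of l N] by (cases "N = 0") (auto simp: f_def)
    qed
    fix l
    show "(\<lambda>N. f l N) \<longlonglongrightarrow> 0"
    proof (rule tendsto_sandwich[OF _ _ tendsto_const small_scale_error_tendsto_0[OF sb i2 c_pos]])
      have "\<forall>\<^sub>F N in sequentially. l < Lv N \<and> 1 \<le> N"
        using Lv_eventually[of l] eventually_ge_at_top[of 1] by eventually_elim simp
      then show "\<forall>\<^sub>F N in sequentially. 0 \<le> f l N"
        and "\<forall>\<^sub>F N in sequentially. f l N \<le> t\<^sup>2 / 6 * (1 / c l) * trunc_cubic_moment (\<mu> l) (\<bar>t\<bar> * (1 / (c l * sqrt (real N))))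
             + t ^ 4 / 4 * (v l)\<^sup>2 * (1 / (c l ^ 3 * real N))"
        by (eventually_elim, use bounds in \<open>simp add: f_def\<close>)+
    qed
  qed simp
  moreover have "(\<Sum>l<Lv N. E l N) = (\<Sum>l. f l N)" for N
    by (subst suminf_finite[of "{..<Lv N}"]) (auto simp: f_def)
  ultimately show ?thesis by (simp add: E_def)
qed

lemma gaussian_product_tendsto:
  fixes w t :: real and v :: "nat \<Rightarrow> real"
  assumes v0: "\<And>l. 0 \<le> v l" and summ: "summable (\<lambda>l. v l / c l)"
  defines "s \<equiv> \<lambda>N l. t * sqrt (real N) / real (n N l)"
  shows "(\<lambda>N. complex_of_real (exp (- ((t / sqrt (real N))\<^sup>2 * w / 2))) ^ N
            * (\<Prod>l<Lv N. complex_of_real (exp (- ((s N l)\<^sup>2 * v l / 2))) ^ n N l))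
         \<longlonglongrightarrow> complex_of_real (exp (- ((w + (\<Sum>l. v l / c l)) * t\<^sup>2 / 2)))"
proof -
  let ?G = "\<lambda>N. exp (- (t\<^sup>2 * w / 2)) * exp (- (t\<^sup>2 / 2) * (\<Sum>l<Lv N. real N * v l / real (n N l)))"
  have power_exp: "complex_of_real (exp a) ^ k = complex_of_real (exp (real k * a))" for a k
    by (simp only: exp_of_nat_mult of_real_power)
  have level: "complex_of_real (exp (- ((s N l)\<^sup>2 * v l / 2))) ^ n N l
      = complex_of_real (exp (- (t\<^sup>2 / 2) * (real N * v l / real (n N l))))" if "l < Lv N" for N l
    using n_pos[OF that]
    by (simp add: power_exp s_def power_divide power_mult_distrib field_simps power2_eq_square)
  have "complex_of_real (exp (- ((t / sqrt (real N))\<^sup>2 * w / 2))) ^ N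
            * (\<Prod>l<Lv N. complex_of_real (exp (- ((s N l)\<^sup>2 * v l / 2))) ^ n N l)
      = complex_of_real (?G N)" if "1 \<le> N" for N
  proof -
    have "complex_of_real (exp (- ((t / sqrt (real N))\<^sup>2 * w / 2))) ^ N = complex_of_real (exp (- (t\<^sup>2 * w / 2)))"
      using that by (simp add: power_exp power_divide)
    moreover have "(\<Prod>l<Lv N. complex_of_real (exp (- ((s N l)\<^sup>2 * v l / 2))) ^ n N l)
        = complex_of_real (exp (- (t\<^sup>2 / 2) * (\<Sum>l<Lv N. real N * v l / real (n N l))))"
      by (simp add: level exp_sum sum_distrib_left flip: of_real_prod)
    ultimately show ?thesis by simp
  qed
  note eq = this
  have ev: "\<forall>\<^sub>F N in sequentially. complex_of_real (?G N)
      = complex_of_real (exp (- ((t / sqrt (real N))\<^sup>2 * w / 2))) ^ N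
            * (\<Prod>l<Lv N. complex_of_real (exp (- ((s N l)\<^sup>2 * v l / 2))) ^ n N l)"
    using eventually_ge_at_top[of 1] by eventually_elim (rule eq[symmetric])
  have "(\<lambda>N. complex_of_real (?G N))
      \<longlonglongrightarrow> complex_of_real (exp (- (t\<^sup>2 * w / 2)) * exp (- (t\<^sup>2 / 2) * (\<Sum>l. v l / c l)))"
    by (intro tendsto_intros scaled_variance_sum_tendsto v0 summ)
  also have "exp (- (t\<^sup>2 * w / 2)) * exp (- (t\<^sup>2 / 2) * (\<Sum>l. v l / c l))
      = exp (- ((w + (\<Sum>l. v l / c l)) * t\<^sup>2 / 2))"
    by (simp add: mult_exp_exp add_divide_distrib algebra_simps)
  finally show ?thesis
    using ev by (rule Lim_transform_eventually)
qed

lemma char_product_tendsto_gaussian: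
  fixes \<mu>0 :: "real measure" and \<mu> :: "nat \<Rightarrow> real measure" and w :: real and v :: "nat \<Rightarrow> real"
  assumes rd0: "real_distribution \<mu>0" and i10: "integrable \<mu>0 (\<lambda>x. x)" and i20: "integrable \<mu>0 (\<lambda>x. x\<^sup>2)"
    and m00: "(\<integral>x. x \<partial>\<mu>0) = 0" and w: "(\<integral>x. x\<^sup>2 \<partial>\<mu>0) = w"
    and rd: "\<And>l. real_distribution (\<mu> l)" and i1: "\<And>l. integrable (\<mu> l) (\<lambda>x. x)"
    and i2: "\<And>l. integrable (\<mu> l) (\<lambda>x. x\<^sup>2)"
    and m0: "\<And>l. (\<integral>x. x \<partial>\<mu> l) = 0" and v: "\<And>l. (\<integral>x. x\<^sup>2 \<partial>\<mu> l) = v l"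
    and summ: "summable (\<lambda>l. v l / c l)"
  shows "(\<lambda>N. char \<mu>0 (t / sqrt (real N)) ^ N * (\<Prod>l<Lv N. char (\<mu> l) (t * sqrt (real N) / real (n N l)) ^ n N l))
     \<longlonglongrightarrow> complex_of_real (exp (- ((w + (\<Sum>l. v l / c l)) * t\<^sup>2 / 2)))"
proof -
  have sb0: "sets \<mu>0 = sets borel" and sb: "sets (\<mu> l) = sets borel" for l
    using rd0 rd[of l] by (simp_all add: real_distribution_def real_distribution_axioms_def)
  have v0: "0 \<le> v l" for l unfolding v[symmetric] by (intro integral_nonneg_AE AE_I2) auto
  have w0: "0 \<le> w" unfolding w[symmetric] by (intro integral_nonneg_AE AE_I2) auto
  define s where "s N l = t * sqrt (real N) / real (n N l)" for N l
  define gauss where "gauss v s = complex_of_real (exp (- (s\<^sup>2 * v / 2)))" for v s :: real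
  define err where "err \<nu> v s k = real k * (s\<^sup>2 / 6 * trunc_cubic_moment \<nu> \<bar>s\<bar> + (s\<^sup>2 * v / 2)\<^sup>2)"
    for \<nu> v s and k :: nat
  have norm_gauss: "norm (gauss v s ^ k) \<le> 1" if "0 \<le> v" for v s k
    using that by (simp add: gauss_def norm_power power_le_one)
  have norm_char: "norm (char \<nu> s ^ k) \<le> 1" if "real_distribution \<nu>" for \<nu> s k
    using real_distribution.cmod_char_le_1[OF that] by (simp add: norm_power power_le_one)
  have "norm (char \<mu>0 (t / sqrt (real N)) ^ N * (\<Prod>l<Lv N. char (\<mu> l) (s N l) ^ n N l)
        - gauss w (t / sqrt (real N)) ^ N * (\<Prod>l<Lv N. gauss (v l) (s N l) ^ n N l))
      \<le> err \<mu>0 w (t / sqrt (real N)) N + (\<Sum>l<Lv N. err (\<mu> l) (v l) (s N l) (n N l))" for N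
  proof -
    have "norm (\<Prod>l<Lv N. char (\<mu> l) (s N l) ^ n N l) \<le> 1"
      by (rule order_trans[OF norm_prod_le]) (auto intro!: prod_le_1 norm_char rd)
    then have "norm (char \<mu>0 (t / sqrt (real N)) ^ N * (\<Prod>l<Lv N. char (\<mu> l) (s N l) ^ n N l)
        - gauss w (t / sqrt (real N)) ^ N * (\<Prod>l<Lv N. gauss (v l) (s N l) ^ n N l))
      \<le> norm (char \<mu>0 (t / sqrt (real N)) ^ N - gauss w (t / sqrt (real N)) ^ N)
        + norm ((\<Prod>l<Lv N. char (\<mu> l) (s N l) ^ n N l) - (\<Prod>l<Lv N. gauss (v l) (s N l) ^ n N l))"
      by (intro norm_mult_diff_le norm_gauss w0)
    also have "\<dots> \<le> err \<mu>0 w (t / sqrt (real N)) N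
        + (\<Sum>l<Lv N. norm (char (\<mu> l) (s N l) ^ n N l - gauss (v l) (s N l) ^ n N l))"
      by (intro add_mono norm_prod_diff norm_char norm_gauss rd v0)
         (unfold gauss_def err_def, rule char_power_sub_gaussian_le[OF rd0 i10 i20 m00 w])
    also have "\<dots> \<le> err \<mu>0 w (t / sqrt (real N)) N + (\<Sum>l<Lv N. err (\<mu> l) (v l) (s N l) (n N l))"
      unfolding gauss_def err_def
      by (intro add_mono order_refl sum_mono char_power_sub_gaussian_le[OF rd i1 i2 m0 v])
    finally show ?thesis .
  qed
  note bound = this
  have err_tendsto: "(\<lambda>N. err \<mu>0 w (t / sqrt (real N)) N + (\<Sum>l<Lv N. err (\<mu> l) (v l) (s N l) (n N l))) \<longlonglongrightarrow> 0"
    using tendsto_add[OF iid_error_tendsto_0[OF sb0 i20 w] level_error_sum_tendsto_0[OF sb i2 v summ]]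
    by (simp add: err_def s_def)
  have "(\<lambda>N. char \<mu>0 (t / sqrt (real N)) ^ N * (\<Prod>l<Lv N. char (\<mu> l) (s N l) ^ n N l)
        - gauss w (t / sqrt (real N)) ^ N * (\<Prod>l<Lv N. gauss (v l) (s N l) ^ n N l)) \<longlonglongrightarrow> 0"
    by (rule Lim_null_comparison[OF always_eventually[OF allI[OF bound]] err_tendsto])
  moreover have "(\<lambda>N. gauss w (t / sqrt (real N)) ^ N * (\<Prod>l<Lv N. gauss (v l) (s N l) ^ n N l))
      \<longlonglongrightarrow> complex_of_real (exp (- ((w + (\<Sum>l. v l / c l)) * t\<^sup>2 / 2)))"
    unfolding gauss_def s_def by (rule gaussian_product_tendsto[OF v0 summ])
  ultimately show ?thesis
    unfolding s_def by (rule Lim_transform[rotated])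
qed

end

lemma (in prob_space) indep_sets_reindex:
  assumes ind: "indep_sets F (g ` I)" and inj: "inj_on g I"
  shows "indep_sets (\<lambda>i. F (g i)) I"
proof (rule indep_setsI)
  fix i assume "i \<in> I" then show "F (g i) \<subseteq> events" using ind by (auto simp: indep_sets_def)
next
  fix A J assume J: "J \<noteq> {}" "J \<subseteq> I" "finite J" and A: "\<forall>j\<in>J. A j \<in> F (g j)"
  define A' where "A' x = A (the_inv_into I g x)" for x
  have A'g: "A' (g j) = A j" if "j \<in> J" for j
    using that J inj by (auto simp: A'_def the_inv_into_f_f)
  have "prob (\<Inter>x\<in>g ` J. A' x) = (\<Prod>x\<in>g ` J. prob (A' x))"
    by (rule indep_setsD[OF ind]) (use J A A'g in auto)
  moreover have "(\<Inter>x\<in>g ` J. A' x) = (\<Inter>j\<in>J. A j)" using A'g by auto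
  moreover have "(\<Prod>x\<in>g ` J. prob (A' x)) = (\<Prod>j\<in>J. prob (A j))"
    using J inj by (subst prod.reindex) (auto intro: inj_on_subset simp: A'g)
  ultimately show "prob (\<Inter>j\<in>J. A j) = (\<Prod>j\<in>J. prob (A j))" by simp
qed

lemma (in prob_space)
  fixes Nr :: "'a \<Rightarrow> nat"
  assumes m: "Nr \<in> measurable M (count_space UNIV)"
    and d: "distr M (count_space UNIV) Nr = measure_pmf (map_pmf (\<lambda>b. if b then 1 else 0) (bernoulli_pmf p))"
    and p: "0 \<le> p" "p \<le> 1"
  shows AE_bernoulli_count_01: "AE \<omega> in M. Nr \<omega> = 0 \<or> Nr \<omega> = 1"
    and integrable_bernoulli_count: "integrable M (\<lambda>\<omega>. real (Nr \<omega>))"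
    and integral_bernoulli_count: "(\<integral>\<omega>. real (Nr \<omega>) \<partial>M) = p"
proof -
  have "AE x in distr M (count_space UNIV) Nr. x = 0 \<or> x = 1"
    unfolding d by (auto simp: AE_measure_pmf_iff)
  then show "AE \<omega> in M. Nr \<omega> = 0 \<or> Nr \<omega> = 1"
    by (subst (asm) AE_distr_iff) (auto simp: m)
  have fin: "finite (set_pmf (map_pmf (\<lambda>b. if b then 1 else (0::nat)) (bernoulli_pmf p)))" by simp
  have "integrable (distr M (count_space UNIV) Nr) real"
    unfolding d by (rule integrable_measure_pmf_finite[OF fin])
  then show "integrable M (\<lambda>\<omega>. real (Nr \<omega>))"
    by (subst (asm) integrable_distr_eq) (auto simp: m)
  have "(\<integral>\<omega>. real (Nr \<omega>) \<partial>M) = (\<integral>x. real x \<partial>distr M (count_space UNIV) Nr)"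
    by (rule integral_distr[symmetric]) (auto simp: m)
  also have "\<dots> = p" unfolding d using p by (simp add: integral_bernoulli_pmf)
  finally show "(\<integral>\<omega>. real (Nr \<omega>) \<partial>M) = p" .
qed

lemma
  fixes f :: "nat \<Rightarrow> 'a \<Rightarrow> real"
  assumes int: "\<And>i. integrable M (f i)" and summ: "summable (\<lambda>i. \<integral>x. \<bar>f i x\<bar> \<partial>M)"
  shows AE_summable_of_summable_L1: "AE x in M. summable (\<lambda>i. f i x)"
    and integrable_suminf_of_summable_L1: "integrable M (\<lambda>x. \<Sum>i. f i x)"
    and integral_abs_suminf_le: "(\<integral>x. \<bar>\<Sum>i. f i x\<bar> \<partial>M) \<le> (\<Sum>i. \<integral>x. \<bar>f i x\<bar> \<partial>M)"
proof -
  have [measurable]: "f i \<in> borel_measurable M" for i using int[of i] by auto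
  have "(\<integral>\<^sup>+x. (\<Sum>i. ennreal \<bar>f i x\<bar>) \<partial>M) = (\<Sum>i. \<integral>\<^sup>+x. ennreal \<bar>f i x\<bar> \<partial>M)"
    by (rule nn_integral_suminf) auto
  also have "\<dots> = (\<Sum>i. ennreal (\<integral>x. \<bar>f i x\<bar> \<partial>M))"
    by (intro arg_cong[where f=suminf] ext nn_integral_eq_integral integrable_abs int) auto
  also have "\<dots> \<noteq> \<infinity>"
    using summ by (simp add: ennreal_suminf_neq_top)
  finally have "AE x in M. (\<Sum>i. ennreal \<bar>f i x\<bar>) \<noteq> \<infinity>"
    by (intro nn_integral_noteq_infinite) auto
  then have sa: "AE x in M. summable (\<lambda>i. \<bar>f i x\<bar>)"
    by eventually_elim (auto intro: summable_suminf_not_top)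
  then show "AE x in M. summable (\<lambda>i. f i x)"
    by eventually_elim (rule summable_rabs_cancel)
  have sa': "AE x in M. summable (\<lambda>i. norm (f i x))" using sa by simp
  have summ': "summable (\<lambda>i. \<integral>x. norm (f i x) \<partial>M)" using summ by simp
  show "integrable M (\<lambda>x. \<Sum>i. f i x)"
    by (rule integrable_suminf[OF int sa' summ'])
  have ia: "integrable M (\<lambda>x. \<Sum>i. \<bar>f i x\<bar>)"
    using integrable_suminf[of M "\<lambda>i x. \<bar>f i x\<bar>"] int sa summ by auto
  have "(\<integral>x. \<bar>\<Sum>i. f i x\<bar> \<partial>M) \<le> (\<integral>x. (\<Sum>i. \<bar>f i x\<bar>) \<partial>M)"
  proof (rule integral_mono_AE)
    show "integrable M (\<lambda>x. \<bar>\<Sum>i. f i x\<bar>)"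
      by (rule integrable_abs, rule integrable_suminf[OF int sa' summ'])
    show "integrable M (\<lambda>x. \<Sum>i. \<bar>f i x\<bar>)" by (rule ia)
    show "AE x in M. \<bar>\<Sum>i. f i x\<bar> \<le> (\<Sum>i. \<bar>f i x\<bar>)"
      using sa by eventually_elim (rule summable_rabs)
  qed
  also have "\<dots> = (\<Sum>i. \<integral>x. \<bar>f i x\<bar> \<partial>M)"
    using integral_suminf[of M "\<lambda>i x. \<bar>f i x\<bar>"] int sa summ by auto
  finally show "(\<integral>x. \<bar>\<Sum>i. f i x\<bar> \<partial>M) \<le> (\<Sum>i. \<integral>x. \<bar>f i x\<bar> \<partial>M)" .
qed

lemma (in prob_space) integral_abs_le_sqrt_square:
  fixes X :: "'a \<Rightarrow> real"
  assumes X[measurable]: "X \<in> borel_measurable M" and i2: "integrable M (\<lambda>x. (X x)\<^sup>2)"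
  shows "(\<integral>x. \<bar>X x\<bar> \<partial>M) \<le> sqrt (\<integral>x. (X x)\<^sup>2 \<partial>M)"
proof -
  have ia: "integrable M (\<lambda>x. \<bar>X x\<bar>)" using square_integrable_imp_integrable[OF X i2] by simp
  define a where "a = (\<integral>x. \<bar>X x\<bar> \<partial>M)"
  have "0 \<le> (\<integral>x. (\<bar>X x\<bar> - a)\<^sup>2 \<partial>M)" by (intro integral_nonneg_AE AE_I2) auto
  also have "(\<integral>x. (\<bar>X x\<bar> - a)\<^sup>2 \<partial>M) = (\<integral>x. (X x)\<^sup>2 - 2 * a * \<bar>X x\<bar> + a\<^sup>2 \<partial>M)"
    by (intro Bochner_Integration.integral_cong refl) (simp add: power2_eq_square algebra_simps)
  also have "\<dots> = (\<integral>x. (X x)\<^sup>2 \<partial>M) - 2 * a * a + a\<^sup>2"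
    using i2 ia by (simp add: prob_space a_def)
  finally have "a\<^sup>2 \<le> (\<integral>x. (X x)\<^sup>2 \<partial>M)" by (simp add: power2_eq_square)
  then show ?thesis unfolding a_def by (simp add: real_le_rsqrt)
qed

lemma char_affine_eq_of_same_law:
  fixes M :: "'b measure" and P :: "'a measure"
  assumes X[measurable]: "X \<in> borel_measurable M" and D[measurable]: "D \<in> borel_measurable P"
    and law: "distr M borel X = distr P borel D"
  shows "char (distr M borel (\<lambda>\<omega>. a * (X \<omega> - m))) t = char (distr P borel (\<lambda>x. D x - m)) (a * t)"
proof -
  have "char (distr M borel (\<lambda>\<omega>. a * (X \<omega> - m))) t = (CLINT \<omega>|M. iexp (t * (a * (X \<omega> - m))))"
    unfolding char_def by (simp add: integral_distr)
  also have "\<dots> = (CLINT x|distr M borel X. iexp (t * (a * (x - m))))"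
    by (rule integral_distr[symmetric]) auto
  also have "\<dots> = (CLINT x|distr P borel D. iexp (t * (a * (x - m))))" by (simp only: law)
  also have "\<dots> = (CLINT x|P. iexp (t * (a * (D x - m))))"
    by (rule integral_distr) auto
  also have "\<dots> = char (distr P borel (\<lambda>x. D x - m)) (a * t)"
    unfolding char_def by (simp add: integral_distr mult.commute mult.left_commute mult.assoc)
  finally show ?thesis .
qed

lemma levy_continuity_eventually:
  assumes F: "\<And>N. 1 \<le> N \<Longrightarrow> real_distribution (F N)" and nu: "real_distribution \<nu>"
    and ch: "\<And>t. (\<lambda>N. char (F N) t) \<longlonglongrightarrow> char \<nu> t"
  shows "weak_conv_m F \<nu>"
proof -
  define G where "G N = (if 1 \<le> N then F N else \<nu>)" for N
  have ev: "\<forall>\<^sub>F N in sequentially. G N = F N"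
    using eventually_ge_at_top[of 1] by eventually_elim (simp add: G_def)
  have "weak_conv_m G \<nu>"
  proof (rule levy_continuity)
    show "real_distribution (G N)" for N using F nu by (simp add: G_def)
    show "real_distribution \<nu>" by (rule nu)
    fix t
    have "\<forall>\<^sub>F N in sequentially. char (F N) t = char (G N) t"
      using ev by eventually_elim simp
    then show "(\<lambda>N. char (G N) t) \<longlonglongrightarrow> char \<nu> t"
      using ch[of t] by (rule Lim_transform_eventually[rotated])
  qed
  then show ?thesis unfolding weak_conv_m_def weak_conv_def
  proof (intro allI impI)
    fix x assume "\<forall>x. isCont (cdf \<nu>) x \<longrightarrow> (\<lambda>n. cdf (G n) x) \<longlonglongrightarrow> cdf \<nu> x" "isCont (cdf \<nu>) x"
    then have "(\<lambda>n. cdf (G n) x) \<longlonglongrightarrow> cdf \<nu> x" by blast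
    moreover have "\<forall>\<^sub>F N in sequentially. cdf (G N) x = cdf (F N) x"
      using ev by eventually_elim simp
    ultimately show "(\<lambda>n. cdf (F n) x) \<longlonglongrightarrow> cdf \<nu> x"
      by (rule Lim_transform_eventually)
  qed
qed

lemma geometric_tail_sums:
  fixes q b :: real and L :: nat
  assumes "0 \<le> q" "q < 1"
  shows "(\<lambda>k. b * q ^ (k + L)) sums (b * q ^ L / (1 - q))"
proof -
  have "(\<lambda>k. q ^ k) sums (1 / (1 - q))" using assms by (intro geometric_sums) simp
  then have "(\<lambda>k. (b * q ^ L) * q ^ k) sums ((b * q ^ L) * (1 / (1 - q)))" by (rule sums_mult)
  then show ?thesis by (simp add: power_add mult_ac)
qed

lemma
  fixes M :: "'b measure" and P :: "'a measure" and g :: "real \<Rightarrow> real"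
  assumes X[measurable]: "X \<in> borel_measurable M" and D[measurable]: "D \<in> borel_measurable P"
    and law: "distr M borel X = distr P borel D" and g[measurable]: "g \<in> borel_measurable borel"
  shows integrable_comp_same_law: "integrable M (\<lambda>\<omega>. g (X \<omega>)) \<longleftrightarrow> integrable P (\<lambda>x. g (D x))"
    and integral_comp_same_law: "(\<integral>\<omega>. g (X \<omega>) \<partial>M) = (\<integral>x. g (D x) \<partial>P)"
proof -
  have "integrable M (\<lambda>\<omega>. g (X \<omega>)) \<longleftrightarrow> integrable (distr M borel X) g"
    by (rule integrable_distr_eq[symmetric]) auto
  also have "\<dots> \<longleftrightarrow> integrable (distr P borel D) g" by (simp only: law)
  also have "\<dots> \<longleftrightarrow> integrable P (\<lambda>x. g (D x))"
    by (rule integrable_distr_eq) auto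
  finally show "integrable M (\<lambda>\<omega>. g (X \<omega>)) \<longleftrightarrow> integrable P (\<lambda>x. g (D x))" .
  have "(\<integral>\<omega>. g (X \<omega>) \<partial>M) = (\<integral>x. g x \<partial>distr M borel X)"
    by (rule integral_distr[symmetric]) auto
  also have "\<dots> = (\<integral>x. g x \<partial>distr P borel D)" by (simp only: law)
  also have "\<dots> = (\<integral>x. g (D x) \<partial>P)" by (rule integral_distr) auto
  finally show "(\<integral>\<omega>. g (X \<omega>) \<partial>M) = (\<integral>x. g (D x) \<partial>P)" .
qed

lemma (in prob_space)
  fixes Y Z :: "'a \<Rightarrow> real"
  assumes ind: "indep_var borel Y borel Z" and iY: "integrable M Y" and iZ: "integrable M Z"
  shows indep_var_integrable_abs_mult: "integrable M (\<lambda>\<omega>. \<bar>Y \<omega>\<bar> * Z \<omega>)"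
    and indep_var_integral_abs_mult:
      "(\<integral>\<omega>. \<bar>Y \<omega>\<bar> * Z \<omega> \<partial>M) = (\<integral>\<omega>. \<bar>Y \<omega>\<bar> \<partial>M) * (\<integral>\<omega>. Z \<omega> \<partial>M)"
proof -
  have ind': "indep_var borel (abs \<circ> Y) borel (id \<circ> Z)"
    by (rule indep_var_compose[OF ind]) auto
  then have ind2: "indep_var borel (\<lambda>\<omega>. \<bar>Y \<omega>\<bar>) borel Z" by (simp add: comp_def)
  show "integrable M (\<lambda>\<omega>. \<bar>Y \<omega>\<bar> * Z \<omega>)"
    by (rule indep_var_integrable[OF ind2]) (use iY iZ in auto)
  show "(\<integral>\<omega>. \<bar>Y \<omega>\<bar> * Z \<omega> \<partial>M) = (\<integral>\<omega>. \<bar>Y \<omega>\<bar> \<partial>M) * (\<integral>\<omega>. Z \<omega> \<partial>M)"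
    by (rule indep_var_lebesgue_integral[OF ind2]) (use iY iZ in auto)
qed

lemma
  assumes "prob_space P" and "integrable P D" and "integrable P (\<lambda>x. (D x)\<^sup>2)"
  shows Var_of_le_second_moment: "Var_of P D \<le> (\<integral>x. (D x)\<^sup>2 \<partial>P)"
    and Var_of_nonneg: "0 \<le> Var_of P D"
proof -
  interpret prob_space P by fact
  define a where "a = (\<integral>x. D x \<partial>P)"
  have "Var_of P D = (\<integral>x. (D x)\<^sup>2 - 2 * a * D x + a\<^sup>2 \<partial>P)"
    unfolding Var_of_def a_def[symmetric]
    by (intro Bochner_Integration.integral_cong refl) (simp add: power2_eq_square algebra_simps)
  also have "\<dots> = (\<integral>x. (D x)\<^sup>2 \<partial>P) - 2 * a * a + a\<^sup>2"
    using assms by (simp add: prob_space a_def)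
  finally show "Var_of P D \<le> (\<integral>x. (D x)\<^sup>2 \<partial>P)" by (simp add: power2_eq_square)
  show "0 \<le> Var_of P D" unfolding Var_of_def by (intro integral_nonneg_AE AE_I2) auto
qed

lemma (in prob_space) char_distr_sum_iid_affine:
  fixes X :: "'i \<Rightarrow> 'a \<Rightarrow> real" and P :: "'c measure"
  assumes ind: "indep_vars (\<lambda>_. borel) X I" and fin: "finite I"
    and law: "\<And>r. r \<in> I \<Longrightarrow> X r \<in> borel_measurable M \<and> distr M borel (X r) = distr P borel Dd"
    and Dd: "Dd \<in> borel_measurable P"
  shows "char (distr M borel (\<lambda>\<omega>. \<Sum>r\<in>I. a * (X r \<omega> - mm))) t = char (distr P borel (\<lambda>x. Dd x - mm)) (a * t) ^ card I"
proof -
  have ind2: "indep_vars (\<lambda>_. borel) (\<lambda>r \<omega>. a * (X r \<omega> - mm)) I"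
    by (rule indep_vars_compose2[OF ind, where Y="\<lambda>r x. a * (x - mm)"]) simp
  have "char (distr M borel (\<lambda>\<omega>. \<Sum>r\<in>I. a * (X r \<omega> - mm))) t = (\<Prod>r\<in>I. char (distr M borel (\<lambda>\<omega>. a * (X r \<omega> - mm))) t)"
    by (rule char_distr_sum[OF ind2])
  also have "\<dots> = (\<Prod>r\<in>I. char (distr P borel (\<lambda>x. Dd x - mm)) (a * t))"
  proof (rule prod.cong[OF refl])
    fix r assume r: "r \<in> I"
    show "char (distr M borel (\<lambda>\<omega>. a * (X r \<omega> - mm))) t = char (distr P borel (\<lambda>x. Dd x - mm)) (a * t)"
      using law[OF r] by (intro char_affine_eq_of_same_law Dd) auto
  qed
  also have "\<dots> = char (distr P borel (\<lambda>x. Dd x - mm)) (a * t) ^ card I" by simp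
  finally show ?thesis .
qed

lemma weak_conv_m_of_L1_approx:
  fixes M :: "nat \<Rightarrow> 'a measure" and X A :: "nat \<Rightarrow> 'a \<Rightarrow> real" and e :: "nat \<Rightarrow> real"
  assumes prob: "\<And>N. 1 \<le> N \<Longrightarrow> prob_space (M N)"
    and X: "\<And>N. 1 \<le> N \<Longrightarrow> X N \<in> borel_measurable (M N)"
    and A: "\<And>N. 1 \<le> N \<Longrightarrow> A N \<in> borel_measurable (M N)"
    and int: "\<And>N. 1 \<le> N \<Longrightarrow> integrable (M N) (\<lambda>\<omega>. X N \<omega> - A N \<omega>)"
    and L1: "\<And>N. 1 \<le> N \<Longrightarrow> (\<integral>\<omega>. \<bar>X N \<omega> - A N \<omega>\<bar> \<partial>M N) \<le> e N" and e: "e \<longlonglongrightarrow> 0"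
    and char: "\<And>t. (\<lambda>N. char (distr (M N) borel (A N)) t) \<longlonglongrightarrow> char \<nu> t"
    and \<nu>: "real_distribution \<nu>"
  shows "weak_conv_m (\<lambda>N. distr (M N) borel (X N)) \<nu>"
proof (rule levy_continuity_eventually[OF _ \<nu>])
  show "real_distribution (distr (M N) borel (X N))" if "1 \<le> N" for N
    by (rule prob_space.real_distribution_distr[OF prob[OF that] X[OF that]])
  fix t
  have "\<forall>\<^sub>F N in sequentially.
      norm (char (distr (M N) borel (X N)) t - char (distr (M N) borel (A N)) t) \<le> \<bar>t\<bar> * e N"
    using eventually_ge_at_top[of 1]
  proof eventually_elim
    case (elim N)
    have "norm (char (distr (M N) borel (X N)) t - char (distr (M N) borel (A N)) t)
        \<le> \<bar>t\<bar> * (\<integral>\<omega>. \<bar>X N \<omega> - A N \<omega>\<bar> \<partial>M N)"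
      by (rule prob_space.norm_char_distr_diff_le[OF prob[OF elim] X[OF elim] A[OF elim] int[OF elim]])
    also have "\<dots> \<le> \<bar>t\<bar> * e N" using L1[OF elim] by (rule mult_left_mono) simp
    finally show ?case .
  qed
  moreover have "(\<lambda>N. \<bar>t\<bar> * e N) \<longlonglongrightarrow> 0"
    using tendsto_mult[OF tendsto_const e] by simp
  ultimately have "(\<lambda>N. char (distr (M N) borel (X N)) t - char (distr (M N) borel (A N)) t) \<longlonglongrightarrow> 0"
    by (rule Lim_null_comparison)
  then show "(\<lambda>N. char (distr (M N) borel (X N)) t) \<longlonglongrightarrow> char \<nu> t"
    by (rule Lim_transform[OF char])
qed

lemma (in prob_space) indep_var_of_indep_sets:
  assumes ind: "indep_sets F I" and ij: "i \<in> I" "j \<in> I" "i \<noteq> j"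
    and X: "X \<in> borel_measurable M" "gen M X \<subseteq> F i"
    and Z: "Z \<in> borel_measurable M" "gen M Z \<subseteq> F j"
  shows "indep_var borel X borel Z"
  unfolding indep_var_def indep_vars_def2
proof
  define g where "g b = (if b then i else j)" for b
  have "indep_sets (\<lambda>b. F (g b)) UNIV"
    by (rule indep_sets_reindex[OF indep_sets_mono_index[OF _ ind]]) (use ij in \<open>auto simp: g_def inj_on_def\<close>)
  then show "indep_sets (\<lambda>b. {case_bool X Z b -` A \<inter> space M |A. A \<in> sets (case_bool borel borel b)}) UNIV"
    by (rule indep_sets_mono_sets) (use X Z in \<open>auto simp: g_def gen_def split: bool.split\<close>)
  show "\<forall>b\<in>UNIV. case_bool X Z b \<in> measurable M (case_bool borel borel b)"
    using X Z by (simp split: bool.split)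
qed

lemma integral_abs_div_add_sub_le:
  fixes M :: "'b measure" and f g :: "'b \<Rightarrow> real"
  assumes "prob_space M" and f: "integrable M f" and g: "integrable M g" and d: "0 < d"
  shows "(\<integral>\<omega>. \<bar>f \<omega> / d + g \<omega> - C\<bar> \<partial>M) \<le> (\<integral>\<omega>. \<bar>f \<omega>\<bar> \<partial>M) / d + (\<integral>\<omega>. \<bar>g \<omega>\<bar> \<partial>M) + \<bar>C\<bar>"
proof -
  interpret prob_space M by fact
  have "(\<integral>\<omega>. \<bar>f \<omega> / d + g \<omega> - C\<bar> \<partial>M) \<le> (\<integral>\<omega>. \<bar>f \<omega>\<bar> / d + \<bar>g \<omega>\<bar> + \<bar>C\<bar> \<partial>M)"
  proof (rule integral_mono)
    fix \<omega>
    show "\<bar>f \<omega> / d + g \<omega> - C\<bar> \<le> \<bar>f \<omega>\<bar> / d + \<bar>g \<omega>\<bar> + \<bar>C\<bar>"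
      using d abs_triangle_ineq[of "f \<omega> / d" "g \<omega>"] abs_triangle_ineq4[of "f \<omega> / d + g \<omega>" C]
      by (simp add: abs_divide)
  qed (use f g in simp_all)
  also have "\<dots> = (\<integral>\<omega>. \<bar>f \<omega>\<bar> \<partial>M) / d + (\<integral>\<omega>. \<bar>g \<omega>\<bar> \<partial>M) + \<bar>C\<bar>"
    using f g by (simp add: prob_space)
  finally show ?thesis .
qed

lemma sum_scaled_centred:
  assumes "1 \<le> n"
  shows "(\<Sum>r\<in>{1..n}. a / real n * (x r - m)) = a * ((\<Sum>r=1..n. x r) / real n - m)"
proof -
  have "(\<Sum>r\<in>{1..n}. a / real n * (x r - m)) = a / real n * ((\<Sum>r\<in>{1..n}. x r) - real n * m)"
    by (simp add: sum_distrib_left[symmetric] sum_divide_distrib[symmetric] sum_subtractf)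
  also have "\<dots> = a * ((\<Sum>r=1..n. x r) / real n - m)"
    using assms by (simp add: field_simps)
  finally show ?thesis .
qed

lemma Slev_eq_of_const_count:
  assumes "prob_space M" and n: "\<And>\<omega>. \<omega> \<in> space M \<Longrightarrow> Nr l \<omega> = n" and \<omega>: "\<omega> \<in> space M"
  shows "Slev M Nr Y l \<omega> = (\<Sum>r=1..n. Y l r \<omega>) / real n"
proof -
  interpret prob_space M by fact
  have "(\<integral>\<omega>. real (Nr l \<omega>) \<partial>M) = (\<integral>\<omega>. real n \<partial>M)"
    by (rule Bochner_Integration.integral_cong) (auto simp: n)
  then show ?thesis by (simp add: Slev_def prob_space n[OF \<omega>])
qed

context prob_space
begin

lemma
  fixes Nr :: "'a \<Rightarrow> nat" and Y :: "'a \<Rightarrow> real"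
  assumes Nr: "Nr \<in> measurable M (count_space UNIV)"
    and law: "distr M (count_space UNIV) Nr = measure_pmf (map_pmf (\<lambda>b. if b then 1 else 0) (bernoulli_pmf p))"
    and p: "0 \<le> p" "p \<le> 1"
    and Y: "integrable M Y" and ind: "indep_var borel Y borel (\<lambda>\<omega>. real (Nr \<omega>))"
  shows integrable_mult_bernoulli_count: "integrable M (\<lambda>\<omega>. Y \<omega> * real (Nr \<omega>))"
    and integral_abs_mult_bernoulli_count: "(\<integral>\<omega>. \<bar>Y \<omega>\<bar> * real (Nr \<omega>) \<partial>M) = p * (\<integral>\<omega>. \<bar>Y \<omega>\<bar> \<partial>M)"
  using indep_var_integrable[OF ind Y integrable_bernoulli_count[OF Nr law p]]
    indep_var_integral_abs_mult[OF ind Y integrable_bernoulli_count[OF Nr law p]]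
    integral_bernoulli_count[OF Nr law p]
  by simp_all

lemma char_scaled_mean_iid:
  fixes X :: "nat \<Rightarrow> 'a \<Rightarrow> real" and P :: "'b measure"
  assumes ind: "indep_vars (\<lambda>_. borel) X {1..n}" and n: "1 \<le> n"
    and law: "\<And>r. r \<in> {1..n} \<Longrightarrow> X r \<in> borel_measurable M \<and> distr M borel (X r) = distr P borel Dd"
    and Dd: "Dd \<in> borel_measurable P"
  shows "char (distr M borel (\<lambda>\<omega>. a * ((\<Sum>r=1..n. X r \<omega>) / real n - m))) t
    = char (distr P borel (\<lambda>x. Dd x - m)) (t * a / real n) ^ n"
proof -
  have eq: "(\<lambda>\<omega>. a * ((\<Sum>r=1..n. X r \<omega>) / real n - m)) = (\<lambda>\<omega>. \<Sum>r\<in>{1..n}. a / real n * (X r \<omega> - m))"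
    by (rule ext, rule sum_scaled_centred[OF n, symmetric])
  have "char (distr M borel (\<lambda>\<omega>. \<Sum>r\<in>{1..n}. a / real n * (X r \<omega> - m))) t
      = char (distr P borel (\<lambda>x. Dd x - m)) (a / real n * t) ^ card {1..n}"
    by (rule char_distr_sum_iid_affine[OF ind _ law Dd]) simp
  moreover have "a / real n * t = t * a / real n" by simp
  ultimately show ?thesis unfolding eq by (simp add: mult.commute)
qed

end

lemma powr_neg_real_eq_power: "0 < x \<Longrightarrow> x powr (- real l) = (1 / x) ^ l"
  by (simp add: powr_minus powr_realpow power_one_over divide_inverse power_inverse)

locale sample_rates =
  fixes c :: "nat \<Rightarrow> real"
  assumes c_pos: "\<And>l. 0 < c l" and c_anti: "\<And>l. c (Suc l) \<le> c l" and c_lim: "c \<longlonglongrightarrow> 0"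
begin

lemma c_antimono: "l \<le> l' \<Longrightarrow> c l' \<le> c l"
  using c_anti by (rule decseq_SucI[THEN decseqD])

lemma ex_rate_le_inverse: "\<exists>l. c l * real N \<le> 1"
proof -
  have "\<forall>\<^sub>F l in sequentially. dist (c l) 0 < 1 / (real N + 1)"
    by (rule tendstoD[OF c_lim]) simp
  then obtain l where "\<bar>c l\<bar> < 1 / (real N + 1)"
    by (auto simp: eventually_sequentially dist_real_def)
  then have "c l < 1 / (real N + 1)" by simp
  then have "c l * (real N + 1) < 1" by (simp add: field_simps)
  then have "c l * real N \<le> 1" using c_pos[of l] by (simp add: algebra_simps)
  then show ?thesis by blast
qed

lemma Lvl_le: "c (Lvl c N) * real N \<le> 1"
  unfolding Lvl_def by (rule LeastI_ex[OF ex_rate_le_inverse])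

lemma Lvl_less: "l < Lvl c N \<Longrightarrow> 1 < c l * real N"
  unfolding Lvl_def using not_less_Least by fastforce

lemma Lvl_ge: "Lvl c N \<le> l \<Longrightarrow> c l * real N \<le> 1"
  using Lvl_le[of N] c_antimono[of "Lvl c N" l] by (meson mult_right_mono of_nat_0_le_iff order_trans)

lemma eventually_less_Lvl: "\<forall>\<^sub>F N in sequentially. l < Lvl c N"
proof -
  obtain k :: nat where k: "1 / c l < real k" using reals_Archimedean2 by blast
  show ?thesis using eventually_ge_at_top[of k]
  proof eventually_elim
    case (elim N)
    then have "1 / c l < real N" using k by linarith
    then have "1 < c l * real N" using c_pos[of l] by (simp add: field_simps)
    then show ?case using Lvl_ge by (meson not_le)
  qed
qed

lemma filterlim_Lvl_at_top: "filterlim (Lvl c) at_top sequentially"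
  unfolding filterlim_at_top
proof
  fix Z show "\<forall>\<^sub>F N in sequentially. Z \<le> Lvl c N"
    using eventually_less_Lvl[of Z] by eventually_elim simp
qed

lemma nsamp_lower: "c l * real N \<le> real (nsamp c N l)"
  unfolding nsamp_def by (simp add: real_nat_ceiling_ge)

lemma nsamp_upper: "real (nsamp c N l) \<le> c l * real N + 1"
  using c_pos[of l] unfolding nsamp_def by (simp add: of_nat_nat)

lemma nsamp_pos: "1 \<le> N \<Longrightarrow> 1 \<le> nsamp c N l"
proof -
  assume "1 \<le> N"
  then have "0 < c l * real N" using c_pos[of l] by simp
  then show ?thesis unfolding nsamp_def by linarith
qed

lemma nsamp_eq_1: "1 \<le> N \<Longrightarrow> Lvl c N \<le> l \<Longrightarrow> nsamp c N l = 1"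
proof -
  assume "1 \<le> N" "Lvl c N \<le> l"
  then have "0 < c l * real N" "c l * real N \<le> 1" using c_pos[of l] Lvl_ge by auto
  then have "\<lceil>c l * real N\<rceil> = 1" by (simp add: ceiling_eq_iff)
  then show ?thesis unfolding nsamp_def by simp
qed

sublocale level_sample_sizes c "Lvl c" "nsamp c"
proof
  show "1 \<le> nsamp c N l" if "l < Lvl c N" for N l
    using Lvl_less[OF that] unfolding nsamp_def by linarith
qed (use c_pos eventually_less_Lvl nsamp_lower nsamp_upper in auto)

text \<open>
  Since \<open>c (Lvl c N) * N \<le> 1\<close> and \<open>c l\<close> decays at most like \<open>phiN ^ -l\<close>, \<open>sqrt N\<close> grows at most
  like \<open>sqrt phiN ^ Lvl c N\<close>, which a geometric factor \<open>q ^ Lvl c N\<close> with \<open>q < 1 / sqrt phiN\<close> beats.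
\<close>
lemma sqrt_mult_geometric_Lvl_tendsto_0:
  fixes cl phiN q K :: real
  assumes cl: "0 < cl" and A2: "\<And>l. cl * phiN powr (- real l) \<le> c l" and phiN: "0 < phiN"
    and q: "0 \<le> q" "sqrt phiN * q < 1"
  shows "(\<lambda>N. sqrt (real N) * (K * q ^ Lvl c N)) \<longlonglongrightarrow> 0"
proof (rule Lim_null_comparison)
  define \<rho> where "\<rho> = sqrt phiN * q"
  show "\<forall>\<^sub>F N in sequentially. norm (sqrt (real N) * (K * q ^ Lvl c N)) \<le> \<bar>K\<bar> / sqrt cl * \<rho> ^ Lvl c N"
  proof (intro always_eventually allI)
    fix N
    let ?L = "Lvl c N"
    have cL: "cl * (1 / phiN) ^ ?L \<le> c ?L"
      using A2[of ?L] phiN by (simp add: powr_neg_real_eq_power)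
    have cLp: "0 < cl * (1 / phiN) ^ ?L" using cl phiN by simp
    have "real N \<le> 1 / c ?L" using Lvl_le[of N] c_pos[of ?L] by (simp add: field_simps)
    also have "\<dots> \<le> 1 / (cl * (1 / phiN) ^ ?L)" using cL cLp by (intro divide_left_mono) auto
    also have "\<dots> = phiN ^ ?L / cl" using phiN by (simp add: power_one_over field_simps)
    finally have "sqrt (real N) \<le> sqrt (phiN ^ ?L / cl)" by simp
    also have "\<dots> = sqrt phiN ^ ?L / sqrt cl" by (simp add: real_sqrt_divide real_sqrt_power)
    finally have "sqrt (real N) \<le> sqrt phiN ^ ?L / sqrt cl" .
    then have "sqrt (real N) * (\<bar>K\<bar> * q ^ ?L) \<le> sqrt phiN ^ ?L / sqrt cl * (\<bar>K\<bar> * q ^ ?L)"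
      using q by (intro mult_right_mono) auto
    then show "norm (sqrt (real N) * (K * q ^ ?L)) \<le> \<bar>K\<bar> / sqrt cl * \<rho> ^ ?L"
      using q by (simp add: \<rho>_def abs_mult power_mult_distrib mult_ac)
  qed
  have "(\<lambda>N. \<bar>K\<bar> / sqrt cl * \<rho> ^ Lvl c N) \<longlonglongrightarrow> \<bar>K\<bar> / sqrt cl * 0"
    using phiN q by (intro tendsto_mult tendsto_const filterlim_compose[OF LIMSEQ_power_zero filterlim_Lvl_at_top])
      (simp_all add: \<rho>_def)
  then show "(\<lambda>N. \<bar>K\<bar> / sqrt cl * \<rho> ^ Lvl c N) \<longlonglongrightarrow> 0" by simp
qed

end

locale mlmc_increments = sample_rates c
  for c :: "nat \<Rightarrow> real" +
  fixes P :: "'a measure" and D0 :: "'a \<Rightarrow> real" and D :: "nat \<Rightarrow> 'a \<Rightarrow> real"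
    and mt :: "nat \<Rightarrow> real" and mu :: real and VD phiD cl phiN :: real
  assumes P: "prob_space P"
    and mt_lim: "mt \<longlonglongrightarrow> mu"
    and D0_rv: "D0 \<in> borel_measurable P"
    and D0_int: "integrable P D0" and D0_sq: "integrable P (\<lambda>x. (D0 x)\<^sup>2)"
    and D0_mean: "(\<integral>x. D0 x \<partial>P) = mt 0"
    and D_rv: "\<And>l. D l \<in> borel_measurable P"
    and D_int: "\<And>l. integrable P (D l)" and D_sq: "\<And>l. integrable P (\<lambda>x. (D l x)\<^sup>2)"
    and D_mean: "\<And>l. (\<integral>x. D l x \<partial>P) = mt (Suc l) - mt l"
    and D_mom: "\<And>l. (\<integral>x. (D l x)\<^sup>2 \<partial>P) \<le> VD * phiD powr (- real l)"
    and c_lower: "\<And>l. cl * phiN powr (- real l) \<le> c l"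
    and cl: "0 < cl" and phiN: "0 < phiN" "phiN < phiD" and phiD: "1 < phiD"
begin

definition "q = sqrt (1 / phiD)"
definition "L1_bound l = sqrt VD * q ^ l"
definition "incr_mean l = mt (Suc l) - mt l"
definition "centred_law0 = distr P borel (\<lambda>x. D0 x - mt 0)"
definition "centred_law l = distr P borel (\<lambda>x. D l x - incr_mean l)"
definition "level_var l = Var_of P (D l)"
definition "sigma2 = Var_of P D0 + (\<Sum>l. level_var l / c l)"
definition "tail_bound L = sqrt VD * q ^ L / (1 - q)"

lemma q_bounds: "0 < q" "q < 1" using phiD by (auto simp: q_def)

lemma VD_nonneg: "0 \<le> VD"
proof -
  have "(\<integral>x. (D 0 x)\<^sup>2 \<partial>P) \<le> VD" using D_mom[of 0] phiD by simp
  moreover have "0 \<le> (\<integral>x. (D 0 x)\<^sup>2 \<partial>P)" by (intro integral_nonneg_AE AE_I2) auto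
  ultimately show ?thesis by linarith
qed

lemma L1_bound_nonneg: "0 \<le> L1_bound l" using q_bounds VD_nonneg by (simp add: L1_bound_def)

lemma integral_abs_D_le: "(\<integral>x. \<bar>D l x\<bar> \<partial>P) \<le> L1_bound l"
proof -
  interpret prob_space P by (rule P)
  have "(\<integral>x. \<bar>D l x\<bar> \<partial>P) \<le> sqrt (\<integral>x. (D l x)\<^sup>2 \<partial>P)"
    by (rule integral_abs_le_sqrt_square[OF D_rv D_sq])
  also have "\<dots> \<le> sqrt (VD * phiD powr (- real l))" using D_mom[of l] by simp
  also have "VD * phiD powr (- real l) = VD * (1 / phiD) ^ l"
    using phiD by (simp add: powr_neg_real_eq_power)
  also have "sqrt \<dots> = L1_bound l" by (simp add: L1_bound_def q_def real_sqrt_mult real_sqrt_power)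
  finally show ?thesis .
qed

lemma abs_incr_mean_le: "\<bar>incr_mean l\<bar> \<le> L1_bound l"
proof -
  have "\<bar>incr_mean l\<bar> = \<bar>\<integral>x. D l x \<partial>P\<bar>" by (simp add: incr_mean_def D_mean)
  also have "\<dots> \<le> (\<integral>x. \<bar>D l x\<bar> \<partial>P)" by (rule integral_abs_bound)
  also have "\<dots> \<le> L1_bound l" by (rule integral_abs_D_le)
  finally show ?thesis .
qed

lemma L1_bound_tail_sums: "(\<lambda>k. L1_bound (k + L)) sums tail_bound L"
  unfolding L1_bound_def tail_bound_def using geometric_tail_sums[of q "sqrt VD" L] q_bounds by simp

lemma L1_bound_le_tail_bound: "L1_bound L \<le> tail_bound L"
proof -
  have "L1_bound (0 + L) \<le> tail_bound L"
    using sum_le_suminf[of "\<lambda>k. L1_bound (k + L)" "{0}"] L1_bound_tail_sums L1_bound_nonneg by (auto simp: sums_iff)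
  then show ?thesis by simp
qed

lemma incr_mean_tail_sums: "(\<lambda>k. incr_mean (k + L)) sums (mu - mt L)"
proof -
  have "(\<lambda>n. \<Sum>k<n. incr_mean (k + L)) = (\<lambda>n. mt (n + L) - mt L)"
  proof
    fix n show "(\<Sum>k<n. incr_mean (k + L)) = mt (n + L) - mt L"
      by (induction n) (simp_all add: incr_mean_def)
  qed
  moreover have "(\<lambda>n. mt (n + L) - mt L) \<longlonglongrightarrow> mu - mt L"
    by (intro tendsto_diff tendsto_const) (rule LIMSEQ_ignore_initial_segment[OF mt_lim])
  ultimately show ?thesis unfolding sums_def by simp
qed

lemma abs_mu_sub_le_tail_bound: "\<bar>mu - mt L\<bar> \<le> tail_bound L"
proof -
  have s1: "summable (\<lambda>k. L1_bound (k + L))" using L1_bound_tail_sums by (rule sums_summable)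
  have s2: "summable (\<lambda>k. \<bar>incr_mean (k + L)\<bar>)"
    by (rule summable_comparison_test[OF _ s1]) (use abs_incr_mean_le in simp)
  have "\<bar>mu - mt L\<bar> = \<bar>\<Sum>k. incr_mean (k + L)\<bar>" using incr_mean_tail_sums by (simp add: sums_iff)
  also have "\<dots> \<le> (\<Sum>k. \<bar>incr_mean (k + L)\<bar>)" by (rule summable_rabs[OF s2])
  also have "\<dots> \<le> (\<Sum>k. L1_bound (k + L))" by (rule suminf_le[OF _ s2 s1]) (use abs_incr_mean_le in simp)
  also have "\<dots> = tail_bound L" using L1_bound_tail_sums by (simp add: sums_iff)
  finally show ?thesis .
qed

lemma sum_incr_mean: "(\<Sum>l<L. incr_mean l) = mt L - mt 0"
  by (induction L) (simp_all add: incr_mean_def)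

lemma level_var_nonneg: "0 \<le> level_var l" unfolding level_var_def by (rule Var_of_nonneg[OF P D_int D_sq])

lemma summable_level_var_div_c: "summable (\<lambda>l. level_var l / c l)"
proof -
  define r where "r = phiN / phiD"
  have r: "0 \<le> r" "r < 1" using phiN phiD by (auto simp: r_def)
  have "summable (\<lambda>l. VD / cl * r ^ l)" using r by (intro summable_mult summable_geometric) simp
  then show ?thesis
  proof (rule summable_comparison_test[rotated], intro exI allI impI)
    fix l :: nat
    have cpos: "0 < c l" by (rule c_pos)
    have "level_var l \<le> VD * phiD powr (- real l)"
      unfolding level_var_def using Var_of_le_second_moment[OF P D_int D_sq, of l] D_mom[of l] by linarith
    also have "\<dots> = VD * (1 / phiD) ^ l" using phiD by (simp add: powr_neg_real_eq_power)
    finally have v1: "level_var l \<le> VD * (1 / phiD) ^ l" .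
    have c1: "cl * (1 / phiN) ^ l \<le> c l"
      using c_lower[of l] phiN by (simp add: powr_neg_real_eq_power)
    have c1p: "0 < cl * (1 / phiN) ^ l" using cl phiN by simp
    have "level_var l / c l \<le> VD * (1 / phiD) ^ l / c l" using v1 cpos by (simp add: divide_right_mono)
    also have "\<dots> \<le> VD * (1 / phiD) ^ l / (cl * (1 / phiN) ^ l)"
      using c1 c1p VD_nonneg phiD by (intro divide_left_mono) auto
    also have "\<dots> = VD / cl * r ^ l" using phiN phiD cl by (simp add: r_def power_divide field_simps)
    finally show "norm (level_var l / c l) \<le> VD / cl * r ^ l" using level_var_nonneg[of l] cpos by simp
  qed
qed

lemma centred_law0_moments: "real_distribution centred_law0" "integrable centred_law0 (\<lambda>x. x)" "integrable centred_law0 (\<lambda>x. x\<^sup>2)"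
    "(\<integral>x. x \<partial>centred_law0) = 0" "(\<integral>x. x\<^sup>2 \<partial>centred_law0) = Var_of P D0"
proof -
  interpret prob_space P by (rule P)
  have [measurable]: "D0 \<in> borel_measurable P" by (rule D0_rv)
  show "real_distribution centred_law0" unfolding centred_law0_def by (rule real_distribution_distr) simp
  show "integrable centred_law0 (\<lambda>x. x)" unfolding centred_law0_def using D0_int
    by (subst integrable_distr_eq) auto
  show "integrable centred_law0 (\<lambda>x. x\<^sup>2)" unfolding centred_law0_def using D0_int D0_sq
    by (subst integrable_distr_eq) (auto simp: power2_diff intro!: Bochner_Integration.integrable_diff Bochner_Integration.integrable_add)
  show "(\<integral>x. x \<partial>centred_law0) = 0" unfolding centred_law0_def using D0_int D0_mean
    by (subst integral_distr) (auto simp: prob_space)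
  show "(\<integral>x. x\<^sup>2 \<partial>centred_law0) = Var_of P D0" unfolding centred_law0_def Var_of_def D0_mean
    by (subst integral_distr) auto
qed

lemma centred_law_moments: "real_distribution (centred_law l)" "integrable (centred_law l) (\<lambda>x. x)" "integrable (centred_law l) (\<lambda>x. x\<^sup>2)"
    "(\<integral>x. x \<partial>centred_law l) = 0" "(\<integral>x. x\<^sup>2 \<partial>centred_law l) = level_var l"
proof -
  interpret prob_space P by (rule P)
  have [measurable]: "D l \<in> borel_measurable P" by (rule D_rv)
  show "real_distribution (centred_law l)" unfolding centred_law_def by (rule real_distribution_distr) simp
  show "integrable (centred_law l) (\<lambda>x. x)" unfolding centred_law_def using D_int[of l]
    by (subst integrable_distr_eq) auto
  show "integrable (centred_law l) (\<lambda>x. x\<^sup>2)" unfolding centred_law_def using D_int[of l] D_sq[of l]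
    by (subst integrable_distr_eq) (auto simp: power2_diff intro!: Bochner_Integration.integrable_diff Bochner_Integration.integrable_add)
  show "(\<integral>x. x \<partial>centred_law l) = 0" unfolding centred_law_def using D_int[of l] D_mean[of l]
    by (subst integral_distr) (auto simp: prob_space incr_mean_def)
  show "(\<integral>x. x\<^sup>2 \<partial>centred_law l) = level_var l" unfolding centred_law_def level_var_def Var_of_def D_mean incr_mean_def
    by (subst integral_distr) auto
qed

definition "char_main N t = char centred_law0 (t / sqrt (real N)) ^ N *
   (\<Prod>l<Lvl c N. char (centred_law l) (t * sqrt (real N) / real (nsamp c N l)) ^ nsamp c N l)"

lemma sigma2_nonneg: "0 \<le> sigma2"
  unfolding sigma2_def
  using Var_of_nonneg[OF P D0_int D0_sq] summable_level_var_div_c level_var_nonneg c_pos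
  by (intro add_nonneg_nonneg suminf_nonneg) (auto intro: divide_nonneg_pos)

lemma char_main_tendsto: "(\<lambda>N. char_main N t) \<longlonglongrightarrow> char (normal_law 0 sigma2) t"
proof -
  have "(\<lambda>N. char_main N t) \<longlonglongrightarrow> complex_of_real (exp (- ((Var_of P D0 + (\<Sum>l. level_var l / c l)) * t\<^sup>2 / 2)))"
    unfolding char_main_def
    by (rule char_product_tendsto_gaussian[OF centred_law0_moments centred_law_moments summable_level_var_div_c])
  then show ?thesis using char_normal_law[OF sigma2_nonneg, of t] by (simp add: sigma2_def)
qed

lemma sqrt_mult_tail_bound_tendsto_0: "(\<lambda>N. sqrt (real N) * tail_bound (Lvl c N)) \<longlonglongrightarrow> 0"
proof -
  have "sqrt phiN * q < 1"
    using phiN phiD by (simp add: q_def real_sqrt_divide[symmetric] real_sqrt_mult[symmetric] field_simps)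
  then have "(\<lambda>N. sqrt (real N) * (sqrt VD / (1 - q) * q ^ Lvl c N)) \<longlonglongrightarrow> 0"
    using q_bounds by (intro sqrt_mult_geometric_Lvl_tendsto_0[OF cl c_lower phiN(1)]) auto
  then show ?thesis by (simp add: tail_bound_def)
qed

lemma tail_series_L1:
  fixes M :: "'b measure" and f :: "nat \<Rightarrow> 'b \<Rightarrow> real" and L :: nat
  assumes int: "\<And>k. integrable M (f k)" and bd: "\<And>k. (\<integral>\<omega>. \<bar>f k \<omega>\<bar> \<partial>M) \<le> L1_bound (k + L)"
  shows "AE \<omega> in M. summable (\<lambda>k. f k \<omega>)"
    and "integrable M (\<lambda>\<omega>. \<Sum>k. f k \<omega>)"
    and "(\<integral>\<omega>. \<bar>\<Sum>k. f k \<omega>\<bar> \<partial>M) \<le> tail_bound L"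
proof -
  have sB: "summable (\<lambda>k. L1_bound (k + L))" using L1_bound_tail_sums by (rule sums_summable)
  have s: "summable (\<lambda>k. \<integral>\<omega>. \<bar>f k \<omega>\<bar> \<partial>M)"
    by (rule summable_comparison_test[OF _ sB]) (use bd in \<open>auto intro!: exI[of _ 0]\<close>)
  show "AE \<omega> in M. summable (\<lambda>k. f k \<omega>)" by (rule AE_summable_of_summable_L1[OF int s])
  show "integrable M (\<lambda>\<omega>. \<Sum>k. f k \<omega>)" by (rule integrable_suminf_of_summable_L1[OF int s])
  have "(\<integral>\<omega>. \<bar>\<Sum>k. f k \<omega>\<bar> \<partial>M) \<le> (\<Sum>k. \<integral>\<omega>. \<bar>f k \<omega>\<bar> \<partial>M)"
    by (rule integral_abs_suminf_le[OF int s])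
  also have "\<dots> \<le> (\<Sum>k. L1_bound (k + L))" by (rule suminf_le[OF bd s sB])
  also have "\<dots> = tail_bound L" using L1_bound_tail_sums by (simp add: sums_iff)
  finally show "(\<integral>\<omega>. \<bar>\<Sum>k. f k \<omega>\<bar> \<partial>M) \<le> tail_bound L" .
qed

lemma
  fixes M :: "'b measure" and X :: "'b \<Rightarrow> real"
  assumes X: "X \<in> borel_measurable M" and law: "distr M borel X = distr P borel (D l)"
  shows integrable_same_law_D: "integrable M X"
    and integral_abs_same_law_D_le: "(\<integral>\<omega>. \<bar>X \<omega>\<bar> \<partial>M) \<le> L1_bound l"
  using integrable_comp_same_law[OF X D_rv law, of "\<lambda>x. x"] D_int[of l]
    integral_comp_same_law[OF X D_rv law, of abs] integral_abs_D_le[of l]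
  by simp_all

lemma summable_tail_term_bound:
  fixes cR :: real and L :: nat
  assumes cR: "0 \<le> cR" "cR < 1"
  defines "b \<equiv> \<lambda>l. if L < l then L1_bound l + cR ^ (l - L) * L1_bound L else 0"
  shows "summable b" and "suminf b \<le> tail_bound L + L1_bound L / (1 - cR)"
proof -
  have "(\<lambda>k. cR ^ k * L1_bound L) sums (L1_bound L / (1 - cR))"
    using sums_mult2[OF geometric_sums[of cR], of "L1_bound L"] cR by (simp add: field_simps)
  then have sums: "(\<lambda>k. L1_bound (k + L) + cR ^ k * L1_bound L) sums (tail_bound L + L1_bound L / (1 - cR))"
    by (rule sums_add[OF L1_bound_tail_sums])
  have le: "b (k + L) \<le> L1_bound (k + L) + cR ^ k * L1_bound L" and nonneg: "0 \<le> b l" for k l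
    using L1_bound_nonneg[of "k + L"] L1_bound_nonneg[of l] L1_bound_nonneg[of L] cR by (auto simp: b_def)
  have shifted: "summable (\<lambda>k. b (k + L))"
    by (rule summable_comparison_test[OF _ sums_summable[OF sums]]) (use le nonneg in auto)
  then show "summable b" by (subst summable_iff_shift[symmetric, of _ L]) simp
  then have "suminf b = (\<Sum>k. b (k + L))"
    by (subst suminf_split_initial_segment[of _ L]) (simp_all add: b_def)
  also have "\<dots> \<le> tail_bound L + L1_bound L / (1 - cR)"
    using suminf_le[OF le shifted sums_summable[OF sums]] sums by (simp add: sums_iff)
  finally show "suminf b \<le> tail_bound L + L1_bound L / (1 - cR)" .
qed

end

locale mlmc_S = mlmc_increments c P D0 D mt mu VD phiD cl phiN
  for c :: "nat \<Rightarrow> real" and P :: "'a measure" and D0 D mt mu VD phiD cl phiN +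
  fixes M :: "nat \<Rightarrow> 'b measure" and X0 :: "nat \<Rightarrow> nat \<Rightarrow> 'b \<Rightarrow> real"
    and Nr :: "nat \<Rightarrow> nat \<Rightarrow> 'b \<Rightarrow> nat" and Y :: "nat \<Rightarrow> nat \<Rightarrow> nat \<Rightarrow> 'b \<Rightarrow> real"
  assumes M_prob: "\<And>N. N \<ge> 1 \<Longrightarrow> prob_space (M N)"
    and X0_law: "\<And>N r. N \<ge> 1 \<Longrightarrow> r \<in> {1..N} \<Longrightarrow>
        X0 N r \<in> borel_measurable (M N) \<and> distr (M N) borel (X0 N r) = distr P borel D0"
    and X0_indep: "\<And>N. N \<ge> 1 \<Longrightarrow> prob_space.indep_vars (M N) (\<lambda>_. borel) (X0 N) {1..N}"
    and Nr_rv: "\<And>N l. N \<ge> 1 \<Longrightarrow> Nr N l \<in> measurable (M N) (count_space UNIV)"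
    and Nr_det: "\<And>N l \<omega>. N \<ge> 1 \<Longrightarrow> l \<le> Lvl c N \<Longrightarrow> \<omega> \<in> space (M N) \<Longrightarrow>
        Nr N l \<omega> = nsamp c N l"
    and Nr_bern: "\<And>N l. N \<ge> 1 \<Longrightarrow> Lvl c N < l \<Longrightarrow>
        distr (M N) (count_space UNIV) (Nr N l)
          = measure_pmf (map_pmf (\<lambda>b. if b then 1 else 0) (bernoulli_pmf (c l * real N)))"
    and Y_law: "\<And>N l r. N \<ge> 1 \<Longrightarrow> r \<in> {1..nsamp c N l} \<Longrightarrow>
        Y N l r \<in> borel_measurable (M N) \<and> distr (M N) borel (Y N l r) = distr P borel (D l)"
    and Y_indep: "\<And>N l. N \<ge> 1 \<Longrightarrow> l < Lvl c N \<Longrightarrow>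
        prob_space.indep_vars (M N) (\<lambda>_. borel) (Y N l) {1..nsamp c N l}"
    and NY_indep: "\<And>N l. N \<ge> 1 \<Longrightarrow> Lvl c N < l \<Longrightarrow>
        prob_space.indep_var (M N) borel (Y N l 1) borel (\<lambda>\<omega>. real (Nr N l \<omega>))"
    and S_indep: "\<And>N. N \<ge> 1 \<Longrightarrow> prob_space.indep_vars (M N) (\<lambda>_. borel)
        (\<lambda>i. case i of None \<Rightarrow> S0_est N (X0 N) | Some l \<Rightarrow> Slev (M N) (Nr N) (Y N) l) UNIV"
begin

lemma
  assumes N: "1 \<le> N"
  shows S0_est_measurable: "S0_est N (X0 N) \<in> borel_measurable (M N)"
    and Slev_measurable: "Slev (M N) (Nr N) (Y N) l \<in> borel_measurable (M N)"
proof -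
  interpret prob_space "M N" by (rule M_prob[OF N])
  have "\<forall>i\<in>UNIV. (case i of None \<Rightarrow> S0_est N (X0 N) | Some l \<Rightarrow> Slev (M N) (Nr N) (Y N) l) \<in> borel_measurable (M N)"
    using S_indep[OF N] unfolding indep_vars_def2 by blast
  from this[THEN bspec, OF UNIV_I, of None] this[THEN bspec, OF UNIV_I, of "Some l"]
  show "S0_est N (X0 N) \<in> borel_measurable (M N)" "Slev (M N) (Nr N) (Y N) l \<in> borel_measurable (M N)"
    by simp_all
qed

text \<open>
  On a level \<open>l \<ge> Lvl c N\<close> the estimator uses at most one sample, kept with probability
  \<open>c l * N\<close> and reweighted by its inverse, so its \<open>L\<^sup>1\<close> norm is that of \<open>D l\<close>.
\<close>
lemma Slev_tail_L1:
  assumes N: "1 \<le> N" and l: "Lvl c N \<le> l"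
  shows "integrable (M N) (Slev (M N) (Nr N) (Y N) l)"
    and "(\<integral>\<omega>. \<bar>Slev (M N) (Nr N) (Y N) l \<omega>\<bar> \<partial>M N) \<le> L1_bound l"
proof -
  interpret prob_space "M N" by (rule M_prob[OF N])
  let ?S = "Slev (M N) (Nr N) (Y N) l" and ?Y = "Y N l 1"
  have Y: "?Y \<in> borel_measurable (M N)" "distr (M N) borel ?Y = distr P borel (D l)"
    using Y_law[OF N, of 1 l] nsamp_eq_1[OF N l] by auto
  note Y_int = integrable_same_law_D[OF Y] and Y_abs = integral_abs_same_law_D_le[OF Y]
  have "integrable (M N) ?S \<and> (\<integral>\<omega>. \<bar>?S \<omega>\<bar> \<partial>M N) \<le> L1_bound l"
  proof (cases "l = Lvl c N")
    case True
    have eq: "?S \<omega> = ?Y \<omega>" if "\<omega> \<in> space (M N)" for \<omega>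
      using Slev_eq_of_const_count[where Nr = "Nr N" and n = "nsamp c N l", OF prob_space_axioms Nr_det[OF N eq_refl[OF True]] that] nsamp_eq_1[OF N l] True
      by simp
    have "integrable (M N) ?S = integrable (M N) ?Y"
      by (rule Bochner_Integration.integrable_cong) (simp_all add: eq)
    moreover have "(\<integral>\<omega>. \<bar>?S \<omega>\<bar> \<partial>M N) = (\<integral>\<omega>. \<bar>?Y \<omega>\<bar> \<partial>M N)"
      by (rule Bochner_Integration.integral_cong) (simp_all add: eq)
    ultimately show ?thesis using Y_int Y_abs by simp
  next
    case False
    then have lL: "Lvl c N < l" using l by simp
    define p where "p = c l * real N"
    have p: "0 < p" "p \<le> 1" using c_pos[of l] N Lvl_ge[OF l] by (auto simp: p_def)
    then have p': "0 \<le> p" "p \<le> 1" by simp_all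
    note Nr = Nr_rv[OF N, of l] and law = Nr_bern[OF N lL, folded p_def]
    have [measurable]: "Nr N l \<in> measurable (M N) (count_space UNIV)" "Y N l (Suc 0) \<in> borel_measurable (M N)"
      "?S \<in> borel_measurable (M N)"
      using Nr Y(1) Slev_measurable[OF N] by simp_all
    have AE_eq: "AE \<omega> in M N. ?S \<omega> = ?Y \<omega> * real (Nr N l \<omega>) / p"
      using AE_bernoulli_count_01[OF Nr law p']
      by eventually_elim (auto simp: Slev_def integral_bernoulli_count[OF Nr law p'] p_def)
    have YN: "integrable (M N) (\<lambda>\<omega>. ?Y \<omega> * real (Nr N l \<omega>))"
      using integrable_mult_bernoulli_count[OF Nr law p' Y_int NY_indep[OF N lL]] .
    have "integrable (M N) ?S"
      using integrable_cong_AE[OF Slev_measurable[OF N] _ AE_eq] YN by simp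
    moreover have "(\<integral>\<omega>. \<bar>?S \<omega>\<bar> \<partial>M N) = (\<integral>\<omega>. \<bar>?Y \<omega>\<bar> * real (Nr N l \<omega>) / p \<partial>M N)"
    proof (rule integral_cong_AE)
      show "AE \<omega> in M N. \<bar>?S \<omega>\<bar> = \<bar>?Y \<omega>\<bar> * real (Nr N l \<omega>) / p"
        using AE_eq by eventually_elim (use p in \<open>simp add: abs_mult\<close>)
    qed auto
    ultimately show ?thesis
      using integral_abs_mult_bernoulli_count[OF Nr law p' Y_int NY_indep[OF N lL]] p Y_abs by simp
  qed
  then show "integrable (M N) ?S" "(\<integral>\<omega>. \<bar>?S \<omega>\<bar> \<partial>M N) \<le> L1_bound l" by simp_all
qed

definition "S_main N \<omega> = sqrt (real N) * (S0_est N (X0 N) \<omega> - mt 0)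
   + (\<Sum>l<Lvl c N. sqrt (real N) * (Slev (M N) (Nr N) (Y N) l \<omega> - incr_mean l))"

definition "S_scaled N \<omega> = sqrt (real N) * (S_est (M N) N (X0 N) (Nr N) (Y N) \<omega> - mu)"

lemma char_S_main:
  assumes N: "1 \<le> N"
  shows "char (distr (M N) borel (S_main N)) t = char_main N t"
proof -
  interpret prob_space "M N" by (rule M_prob[OF N])
  let ?L = "Lvl c N"
  define mm where "mm i = (case i of None \<Rightarrow> mt 0 | Some l \<Rightarrow> incr_mean l)" for i
  define SS where "SS i = (case i of None \<Rightarrow> S0_est N (X0 N) | Some l \<Rightarrow> Slev (M N) (Nr N) (Y N) l)" for i
  define G where "G i \<omega> = sqrt (real N) * (SS i \<omega> - mm i)" for i \<omega>
  have indG: "indep_vars (\<lambda>_. borel) G UNIV"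
    unfolding G_def
    by (rule indep_vars_compose2[OF S_indep[OF N, folded SS_def], where Y="\<lambda>i x. sqrt (real N) * (x - mm i)"]) simp
  define I where "I = insert None (Some ` {..<?L})"
  have "S_main N = (\<lambda>\<omega>. \<Sum>i\<in>I. G i \<omega>)"
    by (rule ext) (simp add: S_main_def I_def G_def SS_def mm_def sum.reindex)
  then have "char (distr (M N) borel (S_main N)) t = (\<Prod>i\<in>I. char (distr (M N) borel (G i)) t)"
    by (simp only:) (rule char_distr_sum[OF indep_vars_subset[OF indG]], simp_all add: I_def)
  also have "\<dots> = char (distr (M N) borel (G None)) t * (\<Prod>l<?L. char (distr (M N) borel (G (Some l))) t)"
    by (simp add: I_def prod.reindex)
  also have "char (distr (M N) borel (G None)) t = char centred_law0 (t / sqrt (real N)) ^ N"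
  proof -
    have "G None = (\<lambda>\<omega>. sqrt (real N) * ((\<Sum>r=1..N. X0 N r \<omega>) / real N - mt 0))"
      by (simp add: fun_eq_iff G_def SS_def mm_def S0_est_def)
    moreover have "t * sqrt (real N) / real N = t / sqrt (real N)"
      using N by (simp add: field_simps real_sqrt_mult[symmetric])
    ultimately show ?thesis
      using char_scaled_mean_iid[OF X0_indep[OF N] N X0_law[OF N] D0_rv, of "sqrt (real N)" "mt 0" t]
      by (simp add: centred_law0_def)
  qed
  also have "(\<Prod>l<?L. char (distr (M N) borel (G (Some l))) t) =
      (\<Prod>l<?L. char (centred_law l) (t * sqrt (real N) / real (nsamp c N l)) ^ nsamp c N l)"
  proof (rule prod.cong[OF refl])
    fix l assume "l \<in> {..<?L}"
    then have lL: "l < ?L" by simp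
    let ?n = "nsamp c N l"
    have "distr (M N) borel (G (Some l))
        = distr (M N) borel (\<lambda>\<omega>. sqrt (real N) * ((\<Sum>r=1..?n. Y N l r \<omega>) / real ?n - incr_mean l))"
      using Slev_eq_of_const_count[where Nr = "Nr N" and n = ?n, OF prob_space_axioms Nr_det[OF N less_imp_le[OF lL]]]
      by (intro distr_cong) (simp_all add: G_def SS_def mm_def)
    then show "char (distr (M N) borel (G (Some l))) t = char (centred_law l) (t * sqrt (real N) / real ?n) ^ ?n"
      using char_scaled_mean_iid[OF Y_indep[OF N lL] nsamp_pos[OF N] Y_law[OF N] D_rv] by (simp add: centred_law_def)
  qed
  finally show ?thesis by (simp add: char_main_def)
qed

text \<open>
  The levels below \<open>Lvl c N\<close> telescope to \<open>mt (Lvl c N)\<close>; what remains of \<open>S\<close> is the tail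
  series of the levels \<open>l \<ge> Lvl c N\<close> together with the bias \<open>mu - mt (Lvl c N)\<close>.
\<close>
lemma
  assumes N: "1 \<le> N"
  shows S_scaled_measurable: "S_scaled N \<in> borel_measurable (M N)"
    and S_main_measurable: "S_main N \<in> borel_measurable (M N)"
    and integrable_S_remainder: "integrable (M N) (\<lambda>\<omega>. S_scaled N \<omega> - S_main N \<omega>)"
    and S_remainder_L1:
      "(\<integral>\<omega>. \<bar>S_scaled N \<omega> - S_main N \<omega>\<bar> \<partial>M N) \<le> sqrt (real N) * (2 * tail_bound (Lvl c N))"
proof -
  interpret prob_space "M N" by (rule M_prob[OF N])
  let ?L = "Lvl c N"
  let ?Sl = "Slev (M N) (Nr N) (Y N)"
  let ?S0 = "S0_est N (X0 N)"
  have [measurable]: "?S0 \<in> borel_measurable (M N)" "\<And>l. ?Sl l \<in> borel_measurable (M N)"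
    by (rule S0_est_measurable[OF N] Slev_measurable[OF N])+
  show [measurable]: "S_scaled N \<in> borel_measurable (M N)"
    unfolding S_scaled_def[abs_def] S_est_def[abs_def] by measurable
  show [measurable]: "S_main N \<in> borel_measurable (M N)"
    unfolding S_main_def[abs_def] by measurable
  define f where "f k = ?Sl (k + ?L)" for k
  note tail = tail_series_L1[of "M N" f ?L, unfolded f_def, OF Slev_tail_L1(1)[OF N] Slev_tail_L1(2)[OF N], simplified, folded f_def]
  define g where "g \<omega> = sqrt (real N) * ((\<Sum>k. f k \<omega>) - (mu - mt ?L))" for \<omega>
  have g: "integrable (M N) g" unfolding g_def using tail(2) by simp
  have AE_eq: "AE \<omega> in M N. S_scaled N \<omega> - S_main N \<omega> = g \<omega>"
    using tail(1)
  proof eventually_elim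
    case (elim \<omega>)
    then have "summable (\<lambda>l. ?Sl l \<omega>)"
      unfolding f_def by (subst summable_iff_shift[symmetric, of _ ?L]) simp
    then have "(\<Sum>l. ?Sl l \<omega>) = (\<Sum>k. f k \<omega>) + (\<Sum>l<?L. ?Sl l \<omega>)"
      unfolding f_def by (rule suminf_split_initial_segment)
    then show ?case
      by (simp add: S_scaled_def S_main_def S_est_def g_def sum_incr_mean
          sum_distrib_left[symmetric] sum_subtractf algebra_simps)
  qed
  have "integrable (M N) (\<lambda>\<omega>. S_scaled N \<omega> - S_main N \<omega>) \<longleftrightarrow> integrable (M N) g"
    by (rule integrable_cong_AE) (use AE_eq g in auto)
  then show "integrable (M N) (\<lambda>\<omega>. S_scaled N \<omega> - S_main N \<omega>)" using g by simp
  have [measurable]: "g \<in> borel_measurable (M N)" using g by auto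
  have "(\<integral>\<omega>. \<bar>S_scaled N \<omega> - S_main N \<omega>\<bar> \<partial>M N) = (\<integral>\<omega>. \<bar>g \<omega>\<bar> \<partial>M N)"
    by (rule integral_cong_AE) (use AE_eq in auto)
  also have "\<dots> = sqrt (real N) * (\<integral>\<omega>. \<bar>(\<Sum>k. f k \<omega>) - (mu - mt ?L)\<bar> \<partial>M N)"
    by (simp add: g_def abs_mult)
  also have "(\<integral>\<omega>. \<bar>(\<Sum>k. f k \<omega>) - (mu - mt ?L)\<bar> \<partial>M N) \<le> (\<integral>\<omega>. \<bar>\<Sum>k. f k \<omega>\<bar> + \<bar>mu - mt ?L\<bar> \<partial>M N)"
    by (rule integral_mono) (use tail(2) in auto)
  also have "\<dots> = (\<integral>\<omega>. \<bar>\<Sum>k. f k \<omega>\<bar> \<partial>M N) + \<bar>mu - mt ?L\<bar>"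
    using tail(2) by (simp add: prob_space)
  also have "\<dots> \<le> 2 * tail_bound ?L" using tail(3) abs_mu_sub_le_tail_bound[of ?L] by simp
  finally show "(\<integral>\<omega>. \<bar>S_scaled N \<omega> - S_main N \<omega>\<bar> \<partial>M N) \<le> sqrt (real N) * (2 * tail_bound ?L)"
    by (simp add: mult_left_mono)
qed

lemma char_S_main_tendsto: "(\<lambda>N. char (distr (M N) borel (S_main N)) t) \<longlonglongrightarrow> char (normal_law 0 sigma2) t"
  using char_main_tendsto
  by (rule Lim_transform_eventually) (use eventually_ge_at_top[of 1] in \<open>eventually_elim, simp add: char_S_main\<close>)

theorem S_weak_conv: "weak_conv_m (\<lambda>N. distr (M N) borel (S_scaled N)) (normal_law 0 sigma2)"
proof (rule weak_conv_m_of_L1_approx[OF M_prob S_scaled_measurable S_main_measurable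
      integrable_S_remainder S_remainder_L1 _ char_S_main_tendsto real_distribution_normal_law[OF sigma2_nonneg]])
  show "(\<lambda>N. sqrt (real N) * (2 * tail_bound (Lvl c N))) \<longlonglongrightarrow> 0"
    using tendsto_mult_left[OF sqrt_mult_tail_bound_tendsto_0, of 2] by (simp add: mult_ac)
qed

end

locale mlmc_SR = mlmc_increments c P D0 D mt mu VD phiD cl phiN
  for c :: "nat \<Rightarrow> real" and P :: "'a measure" and D0 D mt mu VD phiD cl phiN +
  fixes M :: "nat \<Rightarrow> 'c measure" and X0 :: "nat \<Rightarrow> nat \<Rightarrow> 'c \<Rightarrow> real"
    and Nr :: "nat \<Rightarrow> nat \<Rightarrow> 'c \<Rightarrow> nat" and Y :: "nat \<Rightarrow> nat \<Rightarrow> nat \<Rightarrow> 'c \<Rightarrow> real"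
  assumes M_prob: "\<And>N. N \<ge> 1 \<Longrightarrow> prob_space (M N)"
    and X0_law: "\<And>N r. N \<ge> 1 \<Longrightarrow> r \<in> {1..N} \<Longrightarrow>
        X0 N r \<in> borel_measurable (M N) \<and> distr (M N) borel (X0 N r) = distr P borel D0"
    and Nr_rv: "\<And>N l. N \<ge> 1 \<Longrightarrow> Nr N l \<in> measurable (M N) (count_space UNIV)"
    and Nr_det: "\<And>N l \<omega>. N \<ge> 1 \<Longrightarrow> l \<le> Lvl c N \<Longrightarrow> \<omega> \<in> space (M N) \<Longrightarrow>
        Nr N l \<omega> = nsamp c N l"
    and Nr_bern: "\<And>N l. N \<ge> 1 \<Longrightarrow> Lvl c N < l \<Longrightarrow>
        distr (M N) (count_space UNIV) (Nr N l)
          = measure_pmf (map_pmf (\<lambda>b. if b then 1 else 0) (bernoulli_pmf (c l * real N)))"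
    and Y_law: "\<And>N l r. N \<ge> 1 \<Longrightarrow> r \<in> {1..nsamp c N l} \<Longrightarrow>
        Y N l r \<in> borel_measurable (M N) \<and> distr (M N) borel (Y N l r) = distr P borel (D l)"
    and blocks_indep: "\<And>N. N \<ge> 1 \<Longrightarrow>
        prob_space.indep_sets (M N) (blk_sets (M N) c N (X0 N) (Nr N) (Y N)) (blk_index c N)"
begin

definition "sample_blocks N = B0 ` {1..N} \<union> (\<Union>l<Lvl c N. BY l ` {1..nsamp c N l})"

definition "block_var N b = (case b of B0 r \<Rightarrow> X0 N r | BY l r \<Rightarrow> Y N l r
    | BN l \<Rightarrow> (\<lambda>\<omega>. real (Nr N l \<omega>)) | BTail \<Rightarrow> (\<lambda>_. 0))"

lemma indep_block_vars:
  assumes N: "1 \<le> N"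
  shows "prob_space.indep_vars (M N) (\<lambda>_. borel) (block_var N) (sample_blocks N)"
proof -
  interpret prob_space "M N" by (rule M_prob[OF N])
  let ?F = "blk_sets (M N) c N (X0 N) (Nr N) (Y N)"
  have "indep_sets ?F (sample_blocks N)"
    by (rule indep_sets_mono_index[OF _ blocks_indep[OF N]]) (auto simp: sample_blocks_def blk_index_def)
  moreover have "indep_sets ?F (sample_blocks N) \<longleftrightarrow> indep_sets (\<lambda>b. gen (M N) (block_var N b)) (sample_blocks N)"
    by (rule indep_sets_cong) (auto simp: sample_blocks_def blk_sets_def block_var_def)
  moreover have "block_var N b \<in> borel_measurable (M N)" if "b \<in> sample_blocks N" for b
    using that X0_law[OF N] Y_law[OF N] by (auto simp: sample_blocks_def block_var_def)
  ultimately show ?thesis unfolding indep_vars_def2 gen_def by auto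
qed

lemma indep_var_tail_count:
  assumes N: "1 \<le> N" and l: "Lvl c N < l" and j: "Lvl c N \<le> j"
  shows "prob_space.indep_var (M N) borel (Y N j 1) borel (\<lambda>\<omega>. real (Nr N l \<omega>))"
proof (rule prob_space.indep_var_of_indep_sets[OF M_prob[OF N] blocks_indep[OF N], of BTail "BN l"])
  show "BTail \<in> blk_index c N" "BN l \<in> blk_index c N" "BTail \<noteq> BN l"
    using l by (auto simp: blk_index_def)
  show "Y N j 1 \<in> borel_measurable (M N)"
    using Y_law[OF N, of 1 j] nsamp_pos[OF N] by auto
  show "(\<lambda>\<omega>. real (Nr N l \<omega>)) \<in> borel_measurable (M N)"
    by (rule measurable_compose[OF Nr_rv[OF N]]) simp
  have "gen (M N) (Y N j 1) \<subseteq> (\<Union>l\<in>{Lvl c N..}. gen (M N) (Y N l 1))" using j by blast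
  also have "\<dots> \<subseteq> sigma_sets (space (M N)) (\<Union>l\<in>{Lvl c N..}. gen (M N) (Y N l 1))"
    by (rule sigma_sets_superset_generator)
  finally show "gen (M N) (Y N j 1) \<subseteq> blk_sets (M N) c N (X0 N) (Nr N) (Y N) BTail"
    by (simp add: blk_sets_def)
  show "gen (M N) (\<lambda>\<omega>. real (Nr N l \<omega>)) \<subseteq> blk_sets (M N) c N (X0 N) (Nr N) (Y N) (BN l)"
    by (simp add: blk_sets_def)
qed

lemma sum_sample_blocks:
  fixes f :: "blk \<Rightarrow> 'x::comm_monoid_add"
  shows "(\<Sum>b\<in>sample_blocks N. f b) = (\<Sum>r\<in>{1..N}. f (B0 r)) + (\<Sum>l<Lvl c N. \<Sum>r\<in>{1..nsamp c N l}. f (BY l r))"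
proof -
  have d: "B0 ` {1..N} \<inter> (\<Union>l<Lvl c N. BY l ` {1..nsamp c N l}) = {}" by auto
  have "(\<Sum>b\<in>sample_blocks N. f b) = (\<Sum>b\<in>B0 ` {1..N}. f b) + (\<Sum>b\<in>(\<Union>l<Lvl c N. BY l ` {1..nsamp c N l}). f b)"
    unfolding sample_blocks_def by (rule sum.union_disjoint) (auto simp: d)
  also have "(\<Sum>b\<in>B0 ` {1..N}. f b) = (\<Sum>r\<in>{1..N}. f (B0 r))"
    by (rule sum.reindex_cong[OF _ refl refl]) (auto simp: inj_on_def)
  also have "(\<Sum>b\<in>(\<Union>l<Lvl c N. BY l ` {1..nsamp c N l}). f b) = (\<Sum>l<Lvl c N. \<Sum>b\<in>BY l ` {1..nsamp c N l}. f b)"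
    by (rule sum.UNION_disjoint) auto
  also have "\<dots> = (\<Sum>l<Lvl c N. \<Sum>r\<in>{1..nsamp c N l}. f (BY l r))"
    by (intro sum.cong refl sum.reindex_cong[OF _ refl refl]) (auto simp: inj_on_def)
  finally show ?thesis .
qed

lemma prod_sample_blocks:
  fixes f :: "blk \<Rightarrow> 'x::comm_monoid_mult"
  shows "(\<Prod>b\<in>sample_blocks N. f b) = (\<Prod>r\<in>{1..N}. f (B0 r)) * (\<Prod>l<Lvl c N. \<Prod>r\<in>{1..nsamp c N l}. f (BY l r))"
proof -
  have d: "B0 ` {1..N} \<inter> (\<Union>l<Lvl c N. BY l ` {1..nsamp c N l}) = {}" by auto
  have "(\<Prod>b\<in>sample_blocks N. f b) = (\<Prod>b\<in>B0 ` {1..N}. f b) * (\<Prod>b\<in>(\<Union>l<Lvl c N. BY l ` {1..nsamp c N l}). f b)"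
    unfolding sample_blocks_def by (rule prod.union_disjoint) (auto simp: d)
  also have "(\<Prod>b\<in>B0 ` {1..N}. f b) = (\<Prod>r\<in>{1..N}. f (B0 r))"
    by (rule prod.reindex_cong[OF _ refl refl]) (auto simp: inj_on_def)
  also have "(\<Prod>b\<in>(\<Union>l<Lvl c N. BY l ` {1..nsamp c N l}). f b) = (\<Prod>l<Lvl c N. \<Prod>b\<in>BY l ` {1..nsamp c N l}. f b)"
    by (rule prod.UNION_disjoint) auto
  also have "\<dots> = (\<Prod>l<Lvl c N. \<Prod>r\<in>{1..nsamp c N l}. f (BY l r))"
    by (intro prod.cong refl prod.reindex_cong[OF _ refl refl]) (auto simp: inj_on_def)
  finally show ?thesis .
qed

definition "block_term N b x = (case b of B0 r \<Rightarrow> (1 / sqrt (real N)) * (x - mt 0)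
    | BY l r \<Rightarrow> (sqrt (real N) / real (nsamp c N l)) * (x - incr_mean l) | _ \<Rightarrow> 0)"

lemma block_term_measurable: "block_term N b \<in> borel_measurable borel"
  by (cases b) (simp_all add: block_term_def[abs_def])

definition "SR_main N \<omega> = (\<Sum>b\<in>sample_blocks N. block_term N b (block_var N b \<omega>))"

lemma char_SR_main:
  assumes N: "1 \<le> N"
  shows "char (distr (M N) borel (SR_main N)) t = char_main N t"
proof -
  interpret prob_space "M N" by (rule M_prob[OF N])
  define block_char where "block_char b = (case b of B0 r \<Rightarrow> char centred_law0 (t / sqrt (real N))
    | BY l r \<Rightarrow> char (centred_law l) (t * sqrt (real N) / real (nsamp c N l)) | _ \<Rightarrow> 1)" for b
  have ind: "indep_vars (\<lambda>_. borel) (\<lambda>b \<omega>. block_term N b (block_var N b \<omega>)) (sample_blocks N)"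
    by (rule indep_vars_compose2[OF indep_block_vars[OF N], where Y="block_term N"]) (rule block_term_measurable)
  have "char (distr (M N) borel (SR_main N)) t
      = (\<Prod>b\<in>sample_blocks N. char (distr (M N) borel (\<lambda>\<omega>. block_term N b (block_var N b \<omega>))) t)"
    unfolding SR_main_def[abs_def] by (rule char_distr_sum[OF ind])
  also have "\<dots> = (\<Prod>b\<in>sample_blocks N. block_char b)"
  proof (rule prod.cong[OF refl])
    fix b assume "b \<in> sample_blocks N"
    then consider r where "r \<in> {1..N}" "b = B0 r" | l r where "l < Lvl c N" "r \<in> {1..nsamp c N l}" "b = BY l r"
      by (auto simp: sample_blocks_def)
    then show "char (distr (M N) borel (\<lambda>\<omega>. block_term N b (block_var N b \<omega>))) t = block_char b"
    proof cases
      case (1 r)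
      then show ?thesis
        using char_affine_eq_of_same_law[OF _ D0_rv, of "X0 N r" "M N" "1 / sqrt (real N)" "mt 0" t] X0_law[OF N]
        by (simp add: block_term_def block_var_def centred_law0_def block_char_def)
    next
      case (2 l r)
      then show ?thesis
        using char_affine_eq_of_same_law[OF _ D_rv, of "Y N l r" "M N" l "sqrt (real N) / real (nsamp c N l)" "incr_mean l" t]
          Y_law[OF N]
        by (simp add: block_term_def block_var_def centred_law_def block_char_def mult.commute)
    qed
  qed
  also have "\<dots> = char_main N t"
    by (simp add: prod_sample_blocks char_main_def block_char_def)
  finally show ?thesis .
qed

definition "tail_term N cR l \<omega> = (if Lvl c N < l then
    (if Nr N l \<omega> = 1 then 1 else 0) / (\<integral>x. real (Nr N l x) \<partial>M N)
      * (Y N l 1 \<omega> - Y N (Lvl c N) 1 \<omega> * cR ^ (l - Lvl c N))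
    else 0)"

definition "SR_scaled N cR \<omega> = sqrt (real N) * (SR_est (M N) c N cR (X0 N) (Nr N) (Y N) \<omega> - mu)"

lemma SR_est_eq:
  "SR_est (M N) c N cR (X0 N) (Nr N) (Y N) \<omega> = S0_est N (X0 N) \<omega> + (\<Sum>l<Lvl c N. Slev (M N) (Nr N) (Y N) l \<omega>)
     + Y N (Lvl c N) 1 \<omega> / (1 - cR) + (\<Sum>l. tail_term N cR l \<omega>)"
  unfolding SR_est_def tail_term_def Let_def by simp

lemma first_sample_law:
  assumes N: "1 \<le> N"
  shows "Y N j 1 \<in> borel_measurable (M N)" and "distr (M N) borel (Y N j 1) = distr P borel (D j)"
  using Y_law[OF N, of 1 j] nsamp_pos[OF N] by auto

lemma tail_term_measurable:
  assumes N: "1 \<le> N"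
  shows "tail_term N cR l \<in> borel_measurable (M N)"
proof -
  have [measurable]: "Y N l 1 \<in> borel_measurable (M N)" "Y N (Lvl c N) 1 \<in> borel_measurable (M N)"
    "Nr N l \<in> measurable (M N) (count_space UNIV)"
    by (rule first_sample_law(1)[OF N] Nr_rv[OF N])+
  show ?thesis unfolding tail_term_def[abs_def] by measurable
qed

lemma tail_term_L1:
  assumes N: "1 \<le> N" and cR: "0 \<le> cR" and l: "Lvl c N < l"
  shows "integrable (M N) (tail_term N cR l)"
    and "(\<integral>\<omega>. \<bar>tail_term N cR l \<omega>\<bar> \<partial>M N) \<le> L1_bound l + cR ^ (l - Lvl c N) * L1_bound (Lvl c N)"
proof -
  interpret prob_space "M N" by (rule M_prob[OF N])
  let ?L = "Lvl c N" and ?k = "l - Lvl c N" and ?Z = "\<lambda>\<omega>. real (Nr N l \<omega>)"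
  define p where "p = c l * real N"
  have p: "0 < p" "p \<le> 1" using c_pos[of l] N Lvl_ge[of N l] l by (auto simp: p_def)
  then have p': "0 \<le> p" "p \<le> 1" by simp_all
  note Nr = Nr_rv[OF N, of l] and law = Nr_bern[OF N l, folded p_def]
  note Yl = first_sample_law[OF N, of l] and YL = first_sample_law[OF N, of ?L]
  note indl = indep_var_tail_count[OF N l less_imp_le[OF l]]
    and indL = indep_var_tail_count[OF N l order_refl]
  note il = integrable_mult_bernoulli_count[OF Nr law p' integrable_same_law_D[OF Yl] indl]
    and iL = integrable_mult_bernoulli_count[OF Nr law p' integrable_same_law_D[OF YL] indL]
  have [measurable]: "tail_term N cR l \<in> borel_measurable (M N)" by (rule tail_term_measurable[OF N])
  define h where "h \<omega> = (Y N l 1 \<omega> * ?Z \<omega> - cR ^ ?k * (Y N ?L 1 \<omega> * ?Z \<omega>)) / p" for \<omega>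
  have h: "integrable (M N) h" unfolding h_def using il iL by simp
  have [measurable]: "h \<in> borel_measurable (M N)" using h by auto
  have AE_eq: "AE \<omega> in M N. tail_term N cR l \<omega> = h \<omega>"
    using AE_bernoulli_count_01[OF Nr law p']
    by eventually_elim (use l p in \<open>auto simp: tail_term_def h_def integral_bernoulli_count[OF Nr law p'] p_def field_simps\<close>)
  have "integrable (M N) (tail_term N cR l) \<longleftrightarrow> integrable (M N) h"
    by (rule integrable_cong_AE) (use AE_eq in auto)
  then show "integrable (M N) (tail_term N cR l)" using h by simp
  have ia: "integrable (M N) (\<lambda>\<omega>. \<bar>Y N l 1 \<omega>\<bar> * ?Z \<omega>)" "integrable (M N) (\<lambda>\<omega>. \<bar>Y N ?L 1 \<omega>\<bar> * ?Z \<omega>)"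
    using indep_var_integrable_abs_mult[OF indl integrable_same_law_D[OF Yl] integrable_bernoulli_count[OF Nr law p']]
      indep_var_integrable_abs_mult[OF indL integrable_same_law_D[OF YL] integrable_bernoulli_count[OF Nr law p']] .
  have "(\<integral>\<omega>. \<bar>tail_term N cR l \<omega>\<bar> \<partial>M N) = (\<integral>\<omega>. \<bar>h \<omega>\<bar> \<partial>M N)"
    by (rule integral_cong_AE) (use AE_eq in auto)
  also have "\<dots> \<le> (\<integral>\<omega>. (\<bar>Y N l 1 \<omega>\<bar> * ?Z \<omega> + cR ^ ?k * (\<bar>Y N ?L 1 \<omega>\<bar> * ?Z \<omega>)) / p \<partial>M N)"
  proof (rule integral_mono)
    fix \<omega>
    have "\<bar>Y N l 1 \<omega> * ?Z \<omega> - cR ^ ?k * (Y N ?L 1 \<omega> * ?Z \<omega>)\<bar>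
        \<le> \<bar>Y N l 1 \<omega>\<bar> * ?Z \<omega> + cR ^ ?k * (\<bar>Y N ?L 1 \<omega>\<bar> * ?Z \<omega>)"
      using cR by (simp add: abs_mult abs_triangle_ineq4[THEN order_trans])
    then show "\<bar>h \<omega>\<bar> \<le> (\<bar>Y N l 1 \<omega>\<bar> * ?Z \<omega> + cR ^ ?k * (\<bar>Y N ?L 1 \<omega>\<bar> * ?Z \<omega>)) / p"
      using p by (simp add: h_def divide_right_mono)
  qed (use h ia in simp_all)
  also have "\<dots> = ((\<integral>\<omega>. \<bar>Y N l 1 \<omega>\<bar> * ?Z \<omega> \<partial>M N) + cR ^ ?k * (\<integral>\<omega>. \<bar>Y N ?L 1 \<omega>\<bar> * ?Z \<omega> \<partial>M N)) / p"
    using ia by simp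
  also have "\<dots> = (\<integral>\<omega>. \<bar>Y N l 1 \<omega>\<bar> \<partial>M N) + cR ^ ?k * (\<integral>\<omega>. \<bar>Y N ?L 1 \<omega>\<bar> \<partial>M N)"
    using p integral_abs_mult_bernoulli_count[OF Nr law p' integrable_same_law_D[OF Yl] indl]
      integral_abs_mult_bernoulli_count[OF Nr law p' integrable_same_law_D[OF YL] indL]
    by (simp add: field_simps)
  also have "\<dots> \<le> L1_bound l + cR ^ ?k * L1_bound ?L"
    using integral_abs_same_law_D_le[OF Yl] integral_abs_same_law_D_le[OF YL] cR
    by (intro add_mono mult_left_mono) auto
  finally show "(\<integral>\<omega>. \<bar>tail_term N cR l \<omega>\<bar> \<partial>M N) \<le> L1_bound l + cR ^ ?k * L1_bound ?L" .
qed

lemma tail_terms_L1: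
  assumes N: "1 \<le> N" and cR: "0 \<le> cR" "cR < 1"
  shows "AE \<omega> in M N. summable (\<lambda>l. tail_term N cR l \<omega>)"
    and "integrable (M N) (\<lambda>\<omega>. \<Sum>l. tail_term N cR l \<omega>)"
    and "(\<integral>\<omega>. \<bar>\<Sum>l. tail_term N cR l \<omega>\<bar> \<partial>M N) \<le> tail_bound (Lvl c N) + L1_bound (Lvl c N) / (1 - cR)"
proof -
  let ?L = "Lvl c N"
  define b where "b l = (if ?L < l then L1_bound l + cR ^ (l - ?L) * L1_bound ?L else 0)" for l
  have zero: "tail_term N cR l = (\<lambda>_. 0)" if "\<not> ?L < l" for l
    using that by (simp add: fun_eq_iff tail_term_def)
  have int: "integrable (M N) (tail_term N cR l)" for l
    by (cases "?L < l") (simp_all add: tail_term_L1(1)[OF N cR(1)] zero)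
  have bound: "(\<integral>\<omega>. \<bar>tail_term N cR l \<omega>\<bar> \<partial>M N) \<le> b l" for l
    by (cases "?L < l") (simp_all add: tail_term_L1(2)[OF N cR(1)] zero b_def)
  note b = summable_tail_term_bound[OF cR, of ?L, folded b_def]
  have summ: "summable (\<lambda>l. \<integral>\<omega>. \<bar>tail_term N cR l \<omega>\<bar> \<partial>M N)"
    by (rule summable_comparison_test[OF _ b(1)]) (use bound in auto)
  show "AE \<omega> in M N. summable (\<lambda>l. tail_term N cR l \<omega>)"
    by (rule AE_summable_of_summable_L1[OF int summ])
  show "integrable (M N) (\<lambda>\<omega>. \<Sum>l. tail_term N cR l \<omega>)"
    by (rule integrable_suminf_of_summable_L1[OF int summ])
  have "(\<integral>\<omega>. \<bar>\<Sum>l. tail_term N cR l \<omega>\<bar> \<partial>M N) \<le> (\<Sum>l. \<integral>\<omega>. \<bar>tail_term N cR l \<omega>\<bar> \<partial>M N)"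
    by (rule integral_abs_suminf_le[OF int summ])
  also have "\<dots> \<le> suminf b" by (rule suminf_le[OF bound summ b(1)])
  finally show "(\<integral>\<omega>. \<bar>\<Sum>l. tail_term N cR l \<omega>\<bar> \<partial>M N) \<le> tail_bound ?L + L1_bound ?L / (1 - cR)"
    using b(2) by linarith
qed

lemma SR_main_eq:
  assumes N: "1 \<le> N" and \<omega>: "\<omega> \<in> space (M N)"
  shows "SR_main N \<omega> = sqrt (real N) * (S0_est N (X0 N) \<omega> - mt 0)
    + (\<Sum>l<Lvl c N. sqrt (real N) * (Slev (M N) (Nr N) (Y N) l \<omega> - incr_mean l))"
proof -
  have "1 / sqrt (real N) = sqrt (real N) / real N"
    using N by (simp add: field_simps real_sqrt_mult[symmetric])
  then have "(\<Sum>r\<in>{1..N}. block_term N (B0 r) (block_var N (B0 r) \<omega>)) = sqrt (real N) * (S0_est N (X0 N) \<omega> - mt 0)"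
    using sum_scaled_centred[OF N, where a = "sqrt (real N)" and x = "\<lambda>r. X0 N r \<omega>" and m = "mt 0"]
    by (simp add: block_term_def block_var_def S0_est_def)
  moreover have "(\<Sum>r\<in>{1..nsamp c N l}. block_term N (BY l r) (block_var N (BY l r) \<omega>))
      = sqrt (real N) * (Slev (M N) (Nr N) (Y N) l \<omega> - incr_mean l)" if "l < Lvl c N" for l
    using sum_scaled_centred[OF nsamp_pos[OF N, of l], where a = "sqrt (real N)" and x = "\<lambda>r. Y N l r \<omega>" and m = "incr_mean l"]
      Slev_eq_of_const_count[where Nr = "Nr N" and n = "nsamp c N l", OF M_prob[OF N] Nr_det[OF N] \<omega>] that
    by (simp add: block_term_def block_var_def)
  ultimately show ?thesis
    unfolding SR_main_def sum_sample_blocks by simp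
qed

lemma
  assumes N: "1 \<le> N"
  shows SR_scaled_measurable: "SR_scaled N cR \<in> borel_measurable (M N)"
    and SR_main_measurable: "SR_main N \<in> borel_measurable (M N)"
proof -
  interpret prob_space "M N" by (rule M_prob[OF N])
  have "\<forall>b\<in>sample_blocks N. block_var N b \<in> borel_measurable (M N)"
    using indep_block_vars[OF N] unfolding indep_vars_def2 by blast
  then show "SR_main N \<in> borel_measurable (M N)"
    unfolding SR_main_def[abs_def]
    by (intro borel_measurable_sum) (auto intro: measurable_compose[OF _ block_term_measurable])
  have "Slev (M N) (Nr N) (Y N) l \<in> borel_measurable (M N)" if "l < Lvl c N" for l
  proof (rule measurable_cong[THEN iffD2])
    show "\<omega> \<in> space (M N) \<Longrightarrow> Slev (M N) (Nr N) (Y N) l \<omega> = (\<Sum>r=1..nsamp c N l. Y N l r \<omega>) / real (nsamp c N l)" for \<omega>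
      using Slev_eq_of_const_count[where Nr = "Nr N" and n = "nsamp c N l", OF M_prob[OF N] Nr_det[OF N]] that
      by simp
    show "(\<lambda>\<omega>. (\<Sum>r=1..nsamp c N l. Y N l r \<omega>) / real (nsamp c N l)) \<in> borel_measurable (M N)"
      using Y_law[OF N] by (intro borel_measurable_divide borel_measurable_sum borel_measurable_const) auto
  qed
  moreover have "S0_est N (X0 N) \<in> borel_measurable (M N)"
    unfolding S0_est_def[abs_def] using X0_law[OF N]
    by (intro borel_measurable_divide borel_measurable_sum borel_measurable_const) auto
  ultimately show "SR_scaled N cR \<in> borel_measurable (M N)"
    unfolding SR_scaled_def[abs_def] SR_est_eq
    by (intro borel_measurable_add borel_measurable_sum borel_measurable_divide borel_measurable_const
        borel_measurable_diff borel_measurable_times borel_measurable_suminf first_sample_law(1)[OF N]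
        tail_term_measurable[OF N]) auto
qed

text \<open>
  The remainder consists of the reweighted sample on level \<open>Lvl c N\<close>, the tail series and the
  bias \<open>mu - mt (Lvl c N)\<close>, each of \<open>L\<^sup>1\<close> norm \<open>O(tail_bound (Lvl c N))\<close>.
\<close>
lemma
  assumes N: "1 \<le> N" and cR: "0 \<le> cR" "cR < 1"
  shows integrable_SR_remainder: "integrable (M N) (\<lambda>\<omega>. SR_scaled N cR \<omega> - SR_main N \<omega>)"
    and SR_remainder_L1: "(\<integral>\<omega>. \<bar>SR_scaled N cR \<omega> - SR_main N \<omega>\<bar> \<partial>M N)
      \<le> sqrt (real N) * ((2 + 2 / (1 - cR)) * tail_bound (Lvl c N))"
proof -
  interpret prob_space "M N" by (rule M_prob[OF N])
  let ?L = "Lvl c N" and ?T = "\<lambda>\<omega>. \<Sum>l. tail_term N cR l \<omega>"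
  note tail = tail_terms_L1[OF N cR] and YL = first_sample_law[OF N, of ?L]
  define g where "g \<omega> = Y N ?L 1 \<omega> / (1 - cR) + ?T \<omega> - (mu - mt ?L)" for \<omega>
  have eq: "SR_scaled N cR \<omega> - SR_main N \<omega> = sqrt (real N) * g \<omega>" if "\<omega> \<in> space (M N)" for \<omega>
    by (simp add: SR_main_eq[OF N that] SR_scaled_def SR_est_eq g_def sum_distrib_left[symmetric]
        sum_subtractf sum_incr_mean algebra_simps)
  have g: "integrable (M N) g" unfolding g_def using integrable_same_law_D[OF YL] tail(2) by simp
  have "integrable (M N) (\<lambda>\<omega>. SR_scaled N cR \<omega> - SR_main N \<omega>) \<longleftrightarrow> integrable (M N) (\<lambda>\<omega>. sqrt (real N) * g \<omega>)"
    by (rule Bochner_Integration.integrable_cong) (simp_all add: eq)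
  then show "integrable (M N) (\<lambda>\<omega>. SR_scaled N cR \<omega> - SR_main N \<omega>)" using g by simp
  have "(\<integral>\<omega>. \<bar>SR_scaled N cR \<omega> - SR_main N \<omega>\<bar> \<partial>M N) = (\<integral>\<omega>. sqrt (real N) * \<bar>g \<omega>\<bar> \<partial>M N)"
    by (rule Bochner_Integration.integral_cong) (simp_all add: eq abs_mult)
  also have "\<dots> = sqrt (real N) * (\<integral>\<omega>. \<bar>g \<omega>\<bar> \<partial>M N)" by simp
  also have "(\<integral>\<omega>. \<bar>g \<omega>\<bar> \<partial>M N) \<le> (\<integral>\<omega>. \<bar>Y N ?L 1 \<omega>\<bar> \<partial>M N) / (1 - cR) + (\<integral>\<omega>. \<bar>?T \<omega>\<bar> \<partial>M N) + \<bar>mu - mt ?L\<bar>"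
    unfolding g_def using cR
    by (intro integral_abs_div_add_sub_le[OF M_prob[OF N] integrable_same_law_D[OF YL] tail(2)]) simp
  also have "\<dots> \<le> L1_bound ?L / (1 - cR) + (tail_bound ?L + L1_bound ?L / (1 - cR)) + tail_bound ?L"
    using integral_abs_same_law_D_le[OF YL] tail(3) abs_mu_sub_le_tail_bound[of ?L] cR
    by (intro add_mono divide_right_mono) auto
  also have "\<dots> \<le> tail_bound ?L / (1 - cR) + (tail_bound ?L + tail_bound ?L / (1 - cR)) + tail_bound ?L"
    using L1_bound_le_tail_bound[of ?L] cR by (intro add_mono divide_right_mono) auto
  also have "\<dots> = (2 + 2 / (1 - cR)) * tail_bound ?L"
    by (simp add: distrib_right)
  finally show "(\<integral>\<omega>. \<bar>SR_scaled N cR \<omega> - SR_main N \<omega>\<bar> \<partial>M N)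
      \<le> sqrt (real N) * ((2 + 2 / (1 - cR)) * tail_bound ?L)"
    by (simp add: mult_left_mono)
qed

lemma char_SR_main_tendsto: "(\<lambda>N. char (distr (M N) borel (SR_main N)) t) \<longlonglongrightarrow> char (normal_law 0 sigma2) t"
  using char_main_tendsto
  by (rule Lim_transform_eventually) (use eventually_ge_at_top[of 1] in \<open>eventually_elim, simp add: char_SR_main\<close>)

theorem SR_weak_conv:
  assumes cR: "0 \<le> cR" "cR < 1"
  shows "weak_conv_m (\<lambda>N. distr (M N) borel (SR_scaled N cR)) (normal_law 0 sigma2)"
proof (rule weak_conv_m_of_L1_approx[OF M_prob SR_scaled_measurable SR_main_measurable
      integrable_SR_remainder[OF _ cR] SR_remainder_L1[OF _ cR] _ char_SR_main_tendsto
      real_distribution_normal_law[OF sigma2_nonneg]])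
  show "(\<lambda>N. sqrt (real N) * ((2 + 2 / (1 - cR)) * tail_bound (Lvl c N))) \<longlonglongrightarrow> 0"
    using tendsto_mult_left[OF sqrt_mult_tail_bound_tendsto_0, of "2 + 2 / (1 - cR)"] by (simp add: mult_ac)
qed

end

theorem theorem1:
  fixes P :: "'a measure" and D0 :: "'a \<Rightarrow> real" and D :: "nat \<Rightarrow> 'a \<Rightarrow> real"
    and mt :: "nat \<Rightarrow> real" and mu :: real
    and c :: "nat \<Rightarrow> real" and VD phiD cl cu phiN :: real
    and cost0 :: real and cost :: "nat \<Rightarrow> real" and C' K B B0 :: real
    \<comment> \<open>family of probability spaces (one per N) realising S\<close>
    and M :: "nat \<Rightarrow> 'b measure" and X0 :: "nat \<Rightarrow> nat \<Rightarrow> 'b \<Rightarrow> real"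
    and Nr :: "nat \<Rightarrow> nat \<Rightarrow> 'b \<Rightarrow> nat" and Y :: "nat \<Rightarrow> nat \<Rightarrow> nat \<Rightarrow> 'b \<Rightarrow> real"
    \<comment> \<open>family of probability spaces (one per N) realising S(c_R)\<close>
    and M' :: "nat \<Rightarrow> 'c measure" and X0' :: "nat \<Rightarrow> nat \<Rightarrow> 'c \<Rightarrow> real"
    and Nr' :: "nat \<Rightarrow> nat \<Rightarrow> 'c \<Rightarrow> nat" and Y' :: "nat \<Rightarrow> nat \<Rightarrow> nat \<Rightarrow> 'c \<Rightarrow> real"
  assumes P: "prob_space P"
    and mt_lim: "mt \<longlonglongrightarrow> mu"
    \<comment> \<open>(A1)\<close>
    and D0_rv: "D0 \<in> borel_measurable P"
    and D0_int: "integrable P D0" and D0_sq: "integrable P (\<lambda>x. (D0 x)\<^sup>2)"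
    and D0_mean: "(\<integral>x. D0 x \<partial>P) = mt 0"
    and D_rv: "\<And>l. D l \<in> borel_measurable P"
    and D_int: "\<And>l. integrable P (D l)" and D_sq: "\<And>l. integrable P (\<lambda>x. (D l x)\<^sup>2)"
    and D_mean: "\<And>l. (\<integral>x. D l x \<partial>P) = mt (Suc l) - mt l"
    and D_mom: "\<And>l. (\<integral>x. (D l x)\<^sup>2 \<partial>P) \<le> VD * phiD powr (- real l)"
    and VD: "VD > 0" and phiD: "phiD > 2"
    \<comment> \<open>constants c_(l,l+1) and (A2)\<close>
    and c_pos: "\<And>l. c l > 0" and c_anti: "\<And>l. c (Suc l) \<le> c l" and c_lim: "c \<longlonglongrightarrow> 0"
    and A2: "\<And>l. cl * phiN powr (- real l) \<le> c l \<and> c l \<le> cu * phiN powr (- real l)"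
    and cl: "0 < cl" "cl \<le> cu" and phiN: "2 < phiN" "phiN < phiD"
    \<comment> \<open>(A3) (cost bounds; irrelevant to the distributional conclusion)\<close>
    and A3: "\<And>l. cost l \<le> C' * 2 ^ l * (K + real l * B + B0)"
    \<comment> \<open>construction of S for each N \<ge> 1\<close>
    and M_prob: "\<And>N. N \<ge> 1 \<Longrightarrow> prob_space (M N)"
    and X0_law: "\<And>N r. N \<ge> 1 \<Longrightarrow> r \<in> {1..N} \<Longrightarrow>
        X0 N r \<in> borel_measurable (M N) \<and> distr (M N) borel (X0 N r) = distr P borel D0"
    and X0_indep: "\<And>N. N \<ge> 1 \<Longrightarrow> prob_space.indep_vars (M N) (\<lambda>_. borel) (X0 N) {1..N}"
    and Nr_rv: "\<And>N l. N \<ge> 1 \<Longrightarrow> Nr N l \<in> measurable (M N) (count_space UNIV)"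
    and Nr_det: "\<And>N l \<omega>. N \<ge> 1 \<Longrightarrow> l \<le> Lvl c N \<Longrightarrow> \<omega> \<in> space (M N) \<Longrightarrow>
        Nr N l \<omega> = nsamp c N l"
    and Nr_bern: "\<And>N l. N \<ge> 1 \<Longrightarrow> Lvl c N < l \<Longrightarrow>
        distr (M N) (count_space UNIV) (Nr N l)
          = measure_pmf (map_pmf (\<lambda>b. if b then 1 else 0) (bernoulli_pmf (c l * real N)))"
    and Y_law: "\<And>N l r. N \<ge> 1 \<Longrightarrow> r \<in> {1..nsamp c N l} \<Longrightarrow>
        Y N l r \<in> borel_measurable (M N) \<and> distr (M N) borel (Y N l r) = distr P borel (D l)"
    and Y_indep: "\<And>N l. N \<ge> 1 \<Longrightarrow> l < Lvl c N \<Longrightarrow>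
        prob_space.indep_vars (M N) (\<lambda>_. borel) (Y N l) {1..nsamp c N l}"
    and NY_indep: "\<And>N l. N \<ge> 1 \<Longrightarrow> Lvl c N < l \<Longrightarrow>
        prob_space.indep_var (M N) borel (Y N l 1) borel (\<lambda>\<omega>. real (Nr N l \<omega>))"
    and S_indep: "\<And>N. N \<ge> 1 \<Longrightarrow> prob_space.indep_vars (M N) (\<lambda>_. borel)
        (\<lambda>i. case i of None \<Rightarrow> S0_est N (X0 N) | Some l \<Rightarrow> Slev (M N) (Nr N) (Y N) l) UNIV"
    \<comment> \<open>construction of S(c_R) for each N \<ge> 1\<close>
    and M'_prob: "\<And>N. N \<ge> 1 \<Longrightarrow> prob_space (M' N)"
    and X0'_law: "\<And>N r. N \<ge> 1 \<Longrightarrow> r \<in> {1..N} \<Longrightarrow>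
        X0' N r \<in> borel_measurable (M' N) \<and> distr (M' N) borel (X0' N r) = distr P borel D0"
    and Nr'_rv: "\<And>N l. N \<ge> 1 \<Longrightarrow> Nr' N l \<in> measurable (M' N) (count_space UNIV)"
    and Nr'_det: "\<And>N l \<omega>. N \<ge> 1 \<Longrightarrow> l \<le> Lvl c N \<Longrightarrow> \<omega> \<in> space (M' N) \<Longrightarrow>
        Nr' N l \<omega> = nsamp c N l"
    and Nr'_bern: "\<And>N l. N \<ge> 1 \<Longrightarrow> Lvl c N < l \<Longrightarrow>
        distr (M' N) (count_space UNIV) (Nr' N l)
          = measure_pmf (map_pmf (\<lambda>b. if b then 1 else 0) (bernoulli_pmf (c l * real N)))"
    and Y'_law: "\<And>N l r. N \<ge> 1 \<Longrightarrow> r \<in> {1..nsamp c N l} \<Longrightarrow>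
        Y' N l r \<in> borel_measurable (M' N) \<and> distr (M' N) borel (Y' N l r) = distr P borel (D l)"
    and blocks_indep: "\<And>N. N \<ge> 1 \<Longrightarrow>
        prob_space.indep_sets (M' N) (blk_sets (M' N) c N (X0' N) (Nr' N) (Y' N)) (blk_index c N)"
  shows "weak_conv_m (\<lambda>N. distr (M N) borel (\<lambda>\<omega>. sqrt (real N) * (S_est (M N) N (X0 N) (Nr N) (Y N) \<omega> - mu)))
           (normal_law 0 (Var_of P D0 + (\<Sum>l. Var_of P (D l) / c l)))
       \<and> (\<forall>cR. 0 \<le> cR \<and> cR < phiN powr (-1/2) \<longrightarrow>
           weak_conv_m (\<lambda>N. distr (M' N) borel
               (\<lambda>\<omega>. sqrt (real N) * (SR_est (M' N) c N cR (X0' N) (Nr' N) (Y' N) \<omega> - mu)))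
             (normal_law 0 (Var_of P D0 + (\<Sum>l. Var_of P (D l) / c l))))"
proof -
  have rates: "0 < phiN" "1 < phiD" using phiN phiD by simp_all
  have increments: "mlmc_increments c P D0 D mt mu VD phiD cl phiN"
    by (intro mlmc_increments.intro sample_rates.intro mlmc_increments_axioms.intro) (simp_all add: assms rates)
  interpret S: mlmc_S c P D0 D mt mu VD phiD cl phiN M X0 Nr Y
    by (intro mlmc_S.intro[OF increments] mlmc_S_axioms.intro; fact assms)
  interpret R: mlmc_SR c P D0 D mt mu VD phiD cl phiN M' X0' Nr' Y'
    by (intro mlmc_SR.intro[OF increments] mlmc_SR_axioms.intro; fact assms)
  have sigma2: "S.sigma2 = Var_of P D0 + (\<Sum>l. Var_of P (D l) / c l)"
    by (simp add: S.sigma2_def S.level_var_def)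
  have "phiN powr (-1/2) < phiN powr 0"
    using phiN by (intro powr_less_mono) auto
  then have "cR < 1" if "cR < phiN powr (-1/2)" for cR
    using that phiN by simp
  then show ?thesis
    using S.S_weak_conv R.SR_weak_conv
    unfolding sigma2 S.S_scaled_def[abs_def] R.SR_scaled_def[abs_def] by blast
qed

end
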